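(* Let $n\ge2$ and $M\in M_n(k)$. Identify a DG algebra automorphism $f$ of $\mathcal{A}_{\mathcal{O}_{-1}(k^n)}(M)$ with the matrix $C=(c_{ij})\in\mathrm{GL}_n(k)$ given by $f(x_i)=\sum_j c_{ij}x_j$. Under this identification, $$\mathrm{Aut}_{dg}\,\mathcal{A}_{\mathcal{O}_{-1}(k^n)}(M)=\{C=(c_{ij})_{n\times n}\in\mathrm{QPL}_n(k)\mid M=C^{-1}M(c_{ij}^2)_{n\times n}\}.$$
   Context: $k$ is an algebraically closed field of characteristic zero. For $M=(m_{ij})\in M_n(k)$, $\mathcal{A}_{\mathcal{O}_{-1}(k^n)}(M)$ is the connected cochain DG algebra whose underlying graded algebra is generated by degree-one $x_1,\dots,x_n$ subject to $x_ix_j=-x_jx_i$ ($i<j$), with differential determined by $\partial(x_i)=\sum_j m_{ij}x_j^2$ and the Leibniz rule. $\mathrm{Aut}_{dg}$ denotes the group of DG algebra automorphisms (graded algebra automorphisms commuting with the differential). $\mathrm{QPL}_n(k)$ is the group of invertible $n\times n$ matrices with exactly one nonzero entry in each row and each column; $(c_{ij}^2)$ is the matrix of entrywise squares. *)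

theory Defs
  imports "Jordan_Normal_Form.Matrix" "HOL-Computational_Algebra.Polynomial"
    "HOL-Library.Function_Algebras"
begin

text \<open>Concrete model of the graded algebra O_{-1}(k^n): an element is a finitely
 supported function from exponent vectors (monomials x_0^{a 0} ... x_{n-1}^{a (n-1)},
 variables indexed 0..n-1) to coefficients in k.\<close>

type_synonym 'a elt = "(nat \<Rightarrow> nat) \<Rightarrow> 'a"

definition alg_closed_field :: "'a::field itself \<Rightarrow> bool" where
  "alg_closed_field _ \<longleftrightarrow> (\<forall>p::'a poly. degree p > 0 \<longrightarrow> (\<exists>x. poly p x = 0))"

definition mons :: "nat \<Rightarrow> (nat \<Rightarrow> nat) set" where
  "mons n = {a. \<forall>i\<ge>n. a i = 0}"

definition carrierA :: "nat \<Rightarrow> 'a::field elt set" where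
  "carrierA n = {f. finite {a. f a \<noteq> 0} \<and> (\<forall>a. f a \<noteq> 0 \<longrightarrow> a \<in> mons n)}"

text \<open>Sign of x^a * x^b = sign * x^(a+b): each x_i in a (left) passing x_j in b with j<i.\<close>
definition skew_sign :: "nat \<Rightarrow> (nat \<Rightarrow> nat) \<Rightarrow> (nat \<Rightarrow> nat) \<Rightarrow> 'a::field" where
  "skew_sign n a b = (-1) ^ (\<Sum>i<n. \<Sum>j<i. a i * b j)"

definition skmult :: "nat \<Rightarrow> 'a::field elt \<Rightarrow> 'a elt \<Rightarrow> 'a elt" where
  "skmult n f g = (\<lambda>c. \<Sum>(a,b)\<in>{(a,b). f a \<noteq> 0 \<and> g b \<noteq> 0 \<and> (\<lambda>i. a i + b i) = c}.
      skew_sign n a b * f a * g b)"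

definition oneA :: "'a::field elt" where
  "oneA = (\<lambda>c. if c = (\<lambda>_. 0) then 1 else 0)"

definition smul :: "'a::field \<Rightarrow> 'a elt \<Rightarrow> 'a elt" where
  "smul c f = (\<lambda>a. c * f a)"

definition gen :: "nat \<Rightarrow> 'a::field elt" where
  "gen i = (\<lambda>a. if a = (\<lambda>j. if j = i then 1 else 0) then 1 else 0)"

definition degm :: "nat \<Rightarrow> (nat \<Rightarrow> nat) \<Rightarrow> nat" where
  "degm n a = (\<Sum>i<n. a i)"

definition homog :: "nat \<Rightarrow> nat \<Rightarrow> 'a::field elt \<Rightarrow> bool" where
  "homog n d f \<longleftrightarrow> (\<forall>a. f a \<noteq> 0 \<longrightarrow> degm n a = d)"

definition word :: "nat \<Rightarrow> (nat \<Rightarrow> nat) \<Rightarrow> nat list" where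
  "word n a = concat (map (\<lambda>i. replicate (a i) i) [0..<n])"

definition prodl :: "nat \<Rightarrow> nat list \<Rightarrow> 'a::field elt" where
  "prodl n ws = foldr (skmult n) (map gen ws) oneA"

definition dgen :: "nat \<Rightarrow> 'a::field mat \<Rightarrow> nat \<Rightarrow> 'a elt" where
  "dgen n M i = (\<Sum>j<n. smul (M $$ (i,j)) (skmult n (gen j) (gen j)))"

text \<open>Differential on a monomial, by the graded Leibniz rule (generators have degree 1).\<close>
definition dmono :: "nat \<Rightarrow> 'a::field mat \<Rightarrow> (nat \<Rightarrow> nat) \<Rightarrow> 'a elt" where
  "dmono n M a = (let w = word n a in
     (\<Sum>k<length w. smul ((-1) ^ k)
        (skmult n (skmult n (prodl n (take k w)) (dgen n M (w ! k))) (prodl n (drop (Suc k) w)))))"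

definition dA :: "nat \<Rightarrow> 'a::field mat \<Rightarrow> 'a elt \<Rightarrow> 'a elt" where
  "dA n M f = (\<Sum>a\<in>{a. f a \<noteq> 0}. smul (f a) (dmono n M a))"

definition graded_aut :: "nat \<Rightarrow> ('a::field elt \<Rightarrow> 'a elt) \<Rightarrow> bool" where
  "graded_aut n f \<longleftrightarrow> bij_betw f (carrierA n) (carrierA n)
     \<and> (\<forall>x\<in>carrierA n. \<forall>y\<in>carrierA n. f (x + y) = f x + f y)
     \<and> (\<forall>c. \<forall>x\<in>carrierA n. f (smul c x) = smul c (f x))
     \<and> (\<forall>x\<in>carrierA n. \<forall>y\<in>carrierA n. f (skmult n x y) = skmult n (f x) (f y))
     \<and> f oneA = oneA
     \<and> (\<forall>d. \<forall>x\<in>carrierA n. homog n d x \<longrightarrow> homog n d (f x))"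

definition Aut_dg :: "nat \<Rightarrow> 'a::field mat \<Rightarrow> ('a elt \<Rightarrow> 'a elt) set" where
  "Aut_dg n M = {f. graded_aut n f \<and> (\<forall>x\<in>carrierA n. f (dA n M x) = dA n M (f x))}"

definition QPL :: "nat \<Rightarrow> 'a::field mat \<Rightarrow> bool" where
  "QPL n C \<longleftrightarrow> C \<in> carrier_mat n n \<and> invertible_mat C
     \<and> (\<forall>i<n. \<exists>!j. j < n \<and> C $$ (i,j) \<noteq> 0)
     \<and> (\<forall>j<n. \<exists>!i. i < n \<and> C $$ (i,j) \<noteq> 0)"

definition invmat :: "'a::field mat \<Rightarrow> 'a mat" where
  "invmat C = (SOME D. inverts_mat C D \<and> inverts_mat D C)"

definition sqmat :: "'a::field mat \<Rightarrow> 'a mat" where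
  "sqmat C = mat (dim_row C) (dim_col C) (\<lambda>(i,j). (C $$ (i,j))^2)"

end

theory Submission
  imports Defs "Jordan_Normal_Form.Determinant"
begin

text \<open>
  An automorphism f is linear on generators, f(x_i) = \<Sum>_j c_ij x_j, with an invertible matrix C.
  For i \<noteq> j we have x_i x_j + x_j x_i = 0, and the coefficient of x_k^2 in
  f(x_i) f(x_j) + f(x_j) f(x_i) = 0 is 2 c_ik c_jk, so every column of C has a single
  nonzero entry and C is quasi-permutation. Comparing coefficients of x_k^2 in
  f(\<partial> x_i) = \<partial>(f x_i) gives M (c_ij^2) = C M.

  Conversely, a quasi-permutation matrix with x_i \<mapsto> c_i x_\<sigma>(i) extends to the graded
  automorphism sending a monomial x^a to \<plusminus>(\<Prod> c_i^a_i) x^(a \<circ> \<sigma>\<inverse>), the sign counting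
  the transpositions needed to reorder the permuted generators. Since the squares x_l^2 are
  central, \<partial> kills even powers, and \<partial> x^a has an explicit closed form; applying the map to
  it term by term, the relation C M = M (c_ij^2) is exactly what makes it commute with \<partial>.
\<close>

section \<open>Monomials and the skew product\<close>

definition unit_exp :: "nat \<Rightarrow> nat \<Rightarrow> nat" where "unit_exp i = (\<lambda>k. if k = i then 1 else 0)"
definition mono_elt :: "(nat \<Rightarrow> nat) \<Rightarrow> 'a::field elt" where "mono_elt a = (\<lambda>b. if b = a then 1 else 0)"

lemma gen_eq_mono_elt: "gen i = mono_elt (unit_exp i)"
  unfolding gen_def mono_elt_def unit_exp_def by simp

lemma sum_apply: "(\<Sum>x\<in>A. f x) b = (\<Sum>x\<in>A. f x b)"
  by (induction A rule: infinite_finite_induct) auto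

lemma smul_apply: "smul c f b = c * f b" unfolding smul_def by simp

lemma mono_elt_apply: "mono_elt a b = (if b = a then 1 else 0)" unfolding mono_elt_def by simp

lemma skmult_mono_elt: "skmult n (mono_elt a) (mono_elt b) = smul (skew_sign n a b) (mono_elt (\<lambda>i. a i + b i))"
proof (rule ext)
  fix c :: "nat \<Rightarrow> nat"
  show "skmult n (mono_elt a) (mono_elt b) c = smul (skew_sign n a b) (mono_elt (\<lambda>i. a i + b i)) c"
  proof (cases "(\<lambda>i. a i + b i) = c")
    case True
    then have S: "{(a', b'). mono_elt a a' \<noteq> 0 \<and> mono_elt b b' \<noteq> 0 \<and> (\<lambda>i. a' i + b' i) = c} = {(a,b)}"
      by (auto simp: mono_elt_apply)
    show ?thesis unfolding skmult_def S using True by (simp add: mono_elt_apply smul_apply)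
  next
    case False
    then have S: "{(a', b'). mono_elt a a' \<noteq> 0 \<and> mono_elt b b' \<noteq> 0 \<and> (\<lambda>i. a' i + b' i) = c} = {}"
      by (auto simp: mono_elt_apply)
    show ?thesis unfolding skmult_def S using False by (auto simp: mono_elt_apply smul_apply)
  qed
qed

lemma mono_elt_carrierA: "a \<in> mons n \<Longrightarrow> mono_elt a \<in> carrierA n"
  unfolding carrierA_def by (auto simp: mono_elt_apply)
lemma zero_carrierA: "0 \<in> carrierA n"
  unfolding carrierA_def by auto
lemma add_carrierA: "x \<in> carrierA n \<Longrightarrow> y \<in> carrierA n \<Longrightarrow> x + y \<in> carrierA n"
  unfolding carrierA_def
proof (safe, goal_cases)
  case 1
  have "{a. (x + y) a \<noteq> 0} \<subseteq> {a. x a \<noteq> 0} \<union> {a. y a \<noteq> 0}" by auto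
  then show ?case using 1 finite_subset by blast
next
  case (2 a) then show ?case by (metis add.right_neutral plus_fun_apply)
qed
lemma smul_carrierA: "x \<in> carrierA n \<Longrightarrow> smul c x \<in> carrierA n"
  unfolding carrierA_def
proof (safe, goal_cases)
  case 1
  have "{a. smul c x a \<noteq> 0} \<subseteq> {a. x a \<noteq> 0}" by (auto simp: smul_apply)
  then show ?case using 1 finite_subset by blast
next
  case (2 a) then show ?case by (auto simp: smul_apply)
qed
lemma sum_carrierA: "(\<And>i. i \<in> I \<Longrightarrow> g i \<in> carrierA n) \<Longrightarrow> (\<Sum>i\<in>I. g i) \<in> carrierA n"
  by (induction I rule: infinite_finite_induct) (auto intro: add_carrierA zero_carrierA)

lemma unit_exp_mons: "i < n \<Longrightarrow> unit_exp i \<in> mons n" unfolding unit_exp_def mons_def by auto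
lemma gen_carrierA: "i < n \<Longrightarrow> gen i \<in> carrierA n" by (simp add: gen_eq_mono_elt mono_elt_carrierA unit_exp_mons)

lemma unit_exp_eq_iff: "unit_exp i = unit_exp j \<longleftrightarrow> i = j"
  unfolding unit_exp_def by (metis one_neq_zero)

lemma carrierA_finite_support: "x \<in> carrierA n \<Longrightarrow> finite {a. x a \<noteq> 0}"
  unfolding carrierA_def by auto
lemma carrierA_support_mons: "x \<in> carrierA n \<Longrightarrow> x a \<noteq> 0 \<Longrightarrow> a \<in> mons n"
  unfolding carrierA_def by auto

lemma skmult_eq_sum_product:
  assumes "finite A" "finite B" "{a. f a \<noteq> 0} \<subseteq> A" "{b. g b \<noteq> 0} \<subseteq> B"
  shows "skmult n f g c = (\<Sum>(a,b)\<in>A \<times> B. if (\<lambda>i. a i + b i) = c then skew_sign n a b * f a * g b else 0)"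
  unfolding skmult_def
proof (rule sym, rule sum.mono_neutral_cong_right)
  show "finite (A \<times> B)" using assms by auto
  show "{(a, b). f a \<noteq> 0 \<and> g b \<noteq> 0 \<and> (\<lambda>i. a i + b i) = c} \<subseteq> A \<times> B" using assms by auto
qed (auto split: if_splits)

lemma skmult_add_left:
  assumes "x \<in> carrierA n" "y \<in> carrierA n" "z \<in> carrierA n"
  shows "skmult n (x + y) z = skmult n x z + skmult n y z"
proof (rule ext)
  fix c
  let ?A = "{a. x a \<noteq> 0} \<union> {a. y a \<noteq> 0}" and ?B = "{b. z b \<noteq> 0}"
  have fA: "finite ?A" and fB: "finite ?B" using assms carrierA_finite_support by auto
  have 1: "skmult n (x + y) z c = (\<Sum>(a,b)\<in>?A \<times> ?B. if (\<lambda>i. a i + b i) = c then skew_sign n a b * (x+y) a * z b else 0)"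
    by (rule skmult_eq_sum_product[OF fA fB]) (auto simp: smul_apply)
  have 2: "skmult n x z c = (\<Sum>(a,b)\<in>?A \<times> ?B. if (\<lambda>i. a i + b i) = c then skew_sign n a b * x a * z b else 0)"
    by (rule skmult_eq_sum_product[OF fA fB]) (auto simp: smul_apply)
  have 3: "skmult n y z c = (\<Sum>(a,b)\<in>?A \<times> ?B. if (\<lambda>i. a i + b i) = c then skew_sign n a b * y a * z b else 0)"
    by (rule skmult_eq_sum_product[OF fA fB]) (auto simp: smul_apply)
  show "skmult n (x + y) z c = (skmult n x z + skmult n y z) c"
    unfolding plus_fun_apply 1 2 3 sum.distrib[symmetric]
    by (rule sum.cong) (auto simp: algebra_simps)
qed

lemma skmult_add_right:
  assumes "x \<in> carrierA n" "y \<in> carrierA n" "z \<in> carrierA n"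
  shows "skmult n z (x + y) = skmult n z x + skmult n z y"
proof (rule ext)
  fix c
  let ?B = "{a. x a \<noteq> 0} \<union> {a. y a \<noteq> 0}" and ?A = "{b. z b \<noteq> 0}"
  have fA: "finite ?A" and fB: "finite ?B" using assms carrierA_finite_support by auto
  have 1: "skmult n z (x + y) c = (\<Sum>(a,b)\<in>?A \<times> ?B. if (\<lambda>i. a i + b i) = c then skew_sign n a b * z a * (x+y) b else 0)"
    by (rule skmult_eq_sum_product[OF fA fB]) (auto simp: smul_apply)
  have 2: "skmult n z x c = (\<Sum>(a,b)\<in>?A \<times> ?B. if (\<lambda>i. a i + b i) = c then skew_sign n a b * z a * x b else 0)"
    by (rule skmult_eq_sum_product[OF fA fB]) (auto simp: smul_apply)
  have 3: "skmult n z y c = (\<Sum>(a,b)\<in>?A \<times> ?B. if (\<lambda>i. a i + b i) = c then skew_sign n a b * z a * y b else 0)"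
    by (rule skmult_eq_sum_product[OF fA fB]) (auto simp: smul_apply)
  show "skmult n z (x + y) c = (skmult n z x + skmult n z y) c"
    unfolding plus_fun_apply 1 2 3 sum.distrib[symmetric]
    by (rule sum.cong) (auto simp: algebra_simps)
qed

lemma skmult_smul_left:
  assumes "x \<in> carrierA n" "z \<in> carrierA n"
  shows "skmult n (smul k x) z = smul k (skmult n x z)"
proof (rule ext)
  fix c
  let ?A = "{a. x a \<noteq> 0}" and ?B = "{b. z b \<noteq> 0}"
  have fA: "finite ?A" and fB: "finite ?B" using assms carrierA_finite_support by auto
  have 1: "skmult n (smul k x) z c = (\<Sum>(a,b)\<in>?A \<times> ?B. if (\<lambda>i. a i + b i) = c then skew_sign n a b * (smul k x) a * z b else 0)"
    by (rule skmult_eq_sum_product[OF fA fB]) (auto simp: smul_apply)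
  have 2: "skmult n x z c = (\<Sum>(a,b)\<in>?A \<times> ?B. if (\<lambda>i. a i + b i) = c then skew_sign n a b * x a * z b else 0)"
    by (rule skmult_eq_sum_product[OF fA fB]) (auto simp: smul_apply)
  show "skmult n (smul k x) z c = smul k (skmult n x z) c"
    unfolding smul_apply 1 2 sum_distrib_left
    by (rule sum.cong) (auto simp: algebra_simps)
qed

lemma skmult_smul_right:
  assumes "x \<in> carrierA n" "z \<in> carrierA n"
  shows "skmult n z (smul k x) = smul k (skmult n z x)"
proof (rule ext)
  fix c
  let ?B = "{a. x a \<noteq> 0}" and ?A = "{b. z b \<noteq> 0}"
  have fA: "finite ?A" and fB: "finite ?B" using assms carrierA_finite_support by auto
  have 1: "skmult n z (smul k x) c = (\<Sum>(a,b)\<in>?A \<times> ?B. if (\<lambda>i. a i + b i) = c then skew_sign n a b * z a * (smul k x) b else 0)"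
    by (rule skmult_eq_sum_product[OF fA fB]) (auto simp: smul_apply)
  have 2: "skmult n z x c = (\<Sum>(a,b)\<in>?A \<times> ?B. if (\<lambda>i. a i + b i) = c then skew_sign n a b * z a * x b else 0)"
    by (rule skmult_eq_sum_product[OF fA fB]) (auto simp: smul_apply)
  show "skmult n z (smul k x) c = smul k (skmult n z x) c"
    unfolding smul_apply 1 2 sum_distrib_left
    by (rule sum.cong) (auto simp: algebra_simps)
qed

lemma skmult_zero_left: "skmult n 0 z = 0"
  unfolding skmult_def by (rule ext) simp
lemma skmult_zero_right: "skmult n z 0 = 0"
  unfolding skmult_def by (rule ext) simp

lemma skmult_sum_left:
  assumes "\<And>i. i \<in> I \<Longrightarrow> g i \<in> carrierA n" "z \<in> carrierA n"
  shows "skmult n (\<Sum>i\<in>I. smul (k i) (g i)) z = (\<Sum>i\<in>I. smul (k i) (skmult n (g i) z))"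
  using assms
proof (induction I rule: infinite_finite_induct)
  case (insert i I)
  have c1: "smul (k i) (g i) \<in> carrierA n" using insert by (auto intro: smul_carrierA)
  have c2: "(\<Sum>i\<in>I. smul (k i) (g i)) \<in> carrierA n" using insert by (auto intro!: sum_carrierA smul_carrierA)
  have "skmult n (\<Sum>i\<in>insert i I. smul (k i) (g i)) z = skmult n (smul (k i) (g i) + (\<Sum>i\<in>I. smul (k i) (g i))) z"
    by (simp only: sum.insert[OF insert(1,2)])
  also have "\<dots> = smul (k i) (skmult n (g i) z) + (\<Sum>i\<in>I. smul (k i) (skmult n (g i) z))"
  proof -
    have ih: "skmult n (\<Sum>i\<in>I. smul (k i) (g i)) z = (\<Sum>i\<in>I. smul (k i) (skmult n (g i) z))" using insert by auto
    have sm: "skmult n (smul (k i) (g i)) z = smul (k i) (skmult n (g i) z)" using insert by (auto intro!: skmult_smul_left)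
    show ?thesis by (simp only: skmult_add_left[OF c1 c2 insert(5)] ih sm)
  qed
  also have "\<dots> = (\<Sum>i\<in>insert i I. smul (k i) (skmult n (g i) z))"
    by (simp only: sum.insert[OF insert(1,2)])
  finally show ?case .
qed (auto simp: skmult_zero_left)

lemma skmult_sum_right:
  assumes "\<And>i. i \<in> I \<Longrightarrow> g i \<in> carrierA n" "z \<in> carrierA n"
  shows "skmult n z (\<Sum>i\<in>I. smul (k i) (g i)) = (\<Sum>i\<in>I. smul (k i) (skmult n z (g i)))"
  using assms
proof (induction I rule: infinite_finite_induct)
  case (insert i I)
  have c1: "smul (k i) (g i) \<in> carrierA n" using insert by (auto intro: smul_carrierA)
  have c2: "(\<Sum>i\<in>I. smul (k i) (g i)) \<in> carrierA n" using insert by (auto intro!: sum_carrierA smul_carrierA)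
  have "skmult n z (\<Sum>i\<in>insert i I. smul (k i) (g i)) = skmult n z (smul (k i) (g i) + (\<Sum>i\<in>I. smul (k i) (g i)))"
    by (simp only: sum.insert[OF insert(1,2)])
  also have "\<dots> = smul (k i) (skmult n z (g i)) + (\<Sum>i\<in>I. smul (k i) (skmult n z (g i)))"
  proof -
    have ih: "skmult n z (\<Sum>i\<in>I. smul (k i) (g i)) = (\<Sum>i\<in>I. smul (k i) (skmult n z (g i)))" using insert by auto
    have sm: "skmult n z (smul (k i) (g i)) = smul (k i) (skmult n z (g i))" using insert by (auto intro!: skmult_smul_right)
    show ?thesis by (simp only: skmult_add_right[OF c1 c2 insert(5)] ih sm)
  qed
  also have "\<dots> = (\<Sum>i\<in>insert i I. smul (k i) (skmult n z (g i)))"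
    by (simp only: sum.insert[OF insert(1,2)])
  finally show ?case .
qed (auto simp: skmult_zero_right)

definition lin_elt :: "nat \<Rightarrow> (nat \<Rightarrow> 'a::field) \<Rightarrow> 'a elt" where
  "lin_elt n c = (\<Sum>j<n. smul (c j) (gen j))"

lemma lin_elt_apply: "lin_elt n c b = (\<Sum>j<n. if b = unit_exp j then c j else 0)"
  unfolding lin_elt_def sum_apply by (auto simp: gen_eq_mono_elt mono_elt_apply smul_apply intro!: sum.cong)

lemma lin_elt_unit_exp: "j < n \<Longrightarrow> lin_elt n c (unit_exp j) = c j"
  unfolding lin_elt_apply by (simp add: unit_exp_eq_iff)

lemma lin_elt_not_unit_exp: "b \<notin> unit_exp ` {..<n} \<Longrightarrow> lin_elt n c b = 0"
  unfolding lin_elt_apply by (auto intro!: sum.neutral)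

lemma lin_elt_carrierA: "lin_elt n c \<in> carrierA n"
  unfolding lin_elt_def by (auto intro!: sum_carrierA smul_carrierA gen_carrierA)

lemma sum_smul_lin_elt: "(\<Sum>i\<in>I. smul (v i) (lin_elt n (w i))) = lin_elt n (\<lambda>j. \<Sum>i\<in>I. v i * w i j)"
proof (rule ext)
  fix b
  have "(\<Sum>i\<in>I. smul (v i) (lin_elt n (w i))) b = (\<Sum>j<n. \<Sum>i\<in>I. if b = unit_exp j then v i * w i j else 0)"
    unfolding sum_apply smul_apply lin_elt_apply sum_distrib_left
    by (subst sum.swap) (simp add: if_distrib cong: if_cong)
  also have "\<dots> = lin_elt n (\<lambda>j. \<Sum>i\<in>I. v i * w i j) b"
    unfolding lin_elt_apply by (intro sum.cong refl) simp
  finally show "(\<Sum>i\<in>I. smul (v i) (lin_elt n (w i))) b = lin_elt n (\<lambda>j. \<Sum>i\<in>I. v i * w i j) b" .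
qed

lemma lin_elt_cong: "(\<And>j. j < n \<Longrightarrow> c j = d j) \<Longrightarrow> lin_elt n c = lin_elt n d"
  unfolding lin_elt_def by (rule sum.cong) auto

lemma smul_one: "smul 1 x = x" unfolding smul_def by simp
lemma smul_smul: "smul c (smul d x) = smul (c * d) x" unfolding smul_def by (simp add: mult.assoc)
lemma smul_sum_left: "(\<Sum>k\<in>K. smul (f k) h) = smul (\<Sum>k\<in>K. f k) h"
  by (rule ext) (simp add: sum_apply smul_apply sum_distrib_right)
lemma smul_sum_right: "smul c (\<Sum>k\<in>K. h k) = (\<Sum>k\<in>K. smul c (h k))"
  by (rule ext) (simp add: sum_apply smul_apply sum_distrib_left)
lemma smul_zero: "smul 0 x = 0" unfolding smul_def by (rule ext) simp

lemma lin_elt_zero: "lin_elt n (\<lambda>_. 0) = (0 :: 'a::field elt)"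
  unfolding lin_elt_def by (simp add: smul_zero)

lemma minus_one_power_double: "(-1::'a::ring_1)^(2*k) = 1"
  by (simp add: power_mult)
lemma minus_one_power_parity_cong: "x + 2*k = y + 2*l \<Longrightarrow> (-1::'a::ring_1)^x = (-1)^y"
proof -
  assume h: "x + 2*k = y + 2*l"
  have "(-1::'a)^x = (-1)^x * (-1)^(2*k)" by (simp add: minus_one_power_double)
  also have "\<dots> = (-1)^(x + 2*k)" by (simp add: power_add)
  also have "\<dots> = (-1)^(y + 2*l)" using h by simp
  also have "\<dots> = (-1)^y" by (simp add: power_add minus_one_power_double)
  finally show ?thesis .
qed

lemma skew_sign_eq_1_if_sorted: "(\<And>i j. i < n \<Longrightarrow> j < i \<Longrightarrow> a i * b j = 0) \<Longrightarrow> skew_sign n a b = 1"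
proof -
  assume h: "\<And>i j. i < n \<Longrightarrow> j < i \<Longrightarrow> a i * b j = 0"
  have *: "(\<Sum>i<n. \<Sum>j<i. a i * b j) = 0" using h by (auto intro!: sum.neutral)
  show ?thesis unfolding skew_sign_def by (simp only: * power_0)
qed

definition sq_exp :: "nat \<Rightarrow> nat \<Rightarrow> nat" where "sq_exp k = (\<lambda>i. unit_exp k i + unit_exp k i)"

lemma skew_sign_sq_exp_right: "skew_sign n u (sq_exp l) = 1"
proof -
  have "(\<Sum>i<n. \<Sum>j<i. u i * sq_exp l j) = (\<Sum>i<n. \<Sum>j<i. 2 * (u i * unit_exp l j))"
    unfolding sq_exp_def by (simp add: mult_2 distrib_left)
  also have "\<dots> = 2 * (\<Sum>i<n. \<Sum>j<i. u i * unit_exp l j)" by (simp add: sum_distrib_left)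
  finally have "(\<Sum>i<n. \<Sum>j<i. u i * sq_exp l j) = 2 * (\<Sum>i<n. \<Sum>j<i. u i * unit_exp l j)" .
  then show ?thesis unfolding skew_sign_def by (simp add: minus_one_power_double)
qed

lemma skew_sign_sq_exp_left: "skew_sign n (\<lambda>x. u x + sq_exp l x) v = skew_sign n u v"
proof -
  have "(\<Sum>i<n. \<Sum>j<i. (u i + sq_exp l i) * v j) = (\<Sum>i<n. \<Sum>j<i. u i * v j + 2 * (unit_exp l i * v j))"
    unfolding sq_exp_def by (simp add: mult_2 distrib_left distrib_right)
  also have "\<dots> = (\<Sum>i<n. \<Sum>j<i. u i * v j) + 2 * (\<Sum>i<n. \<Sum>j<i. unit_exp l i * v j)"
    by (simp add: sum_distrib_left sum.distrib)
  finally have "(\<Sum>i<n. \<Sum>j<i. (u i + sq_exp l i) * v j)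
      = (\<Sum>i<n. \<Sum>j<i. u i * v j) + 2 * (\<Sum>i<n. \<Sum>j<i. unit_exp l i * v j)" .
  then show ?thesis unfolding skew_sign_def by (simp add: power_add minus_one_power_double)
qed

lemma unit_exp_apply: "unit_exp i k = (if k = i then 1 else 0)" unfolding unit_exp_def by simp

lemma unit_exp_mult: "unit_exp i a * x = (if a = i then x else 0)" unfolding unit_exp_def by simp

lemma skew_sign_unit_exp: "skew_sign n (unit_exp i) (unit_exp j) = (if j < i \<and> i < n then -1 else 1)"
proof -
  have "(\<Sum>a<n. \<Sum>b<a. unit_exp i a * unit_exp j b) = (\<Sum>a<n. if a = i then (if j < a then 1 else 0) else 0)"
    by (rule sum.cong) (auto simp: unit_exp_mult unit_exp_def sum.delta)
  also have "\<dots> = (if j < i \<and> i < n then 1 else 0)" by (simp add: sum.delta)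
  finally show ?thesis unfolding skew_sign_def by simp
qed

lemma unit_exp_sum_eq_sq_exp_iff: "(\<lambda>x. unit_exp j x + unit_exp l x) = sq_exp k \<longleftrightarrow> j = k \<and> l = k"
proof
  assume h: "(\<lambda>x. unit_exp j x + unit_exp l x) = sq_exp k"
  have "unit_exp j j + unit_exp l j = sq_exp k j" using h by metis
  then have "j = k" unfolding sq_exp_def unit_exp_def by (auto split: if_splits)
  moreover have "unit_exp j l + unit_exp l l = sq_exp k l" using h by metis
  then have "l = k" unfolding sq_exp_def unit_exp_def by (auto split: if_splits)
  ultimately show "j = k \<and> l = k" by simp
qed (simp add: sq_exp_def)

lemma sq_exp_eq_iff: "sq_exp j = sq_exp k \<longleftrightarrow> j = k"
  using unit_exp_sum_eq_sq_exp_iff[of j j k] unfolding sq_exp_def by auto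

lemma sq_exp_mons: "l < n \<Longrightarrow> sq_exp l \<in> mons n" unfolding sq_exp_def unit_exp_def mons_def by auto

lemma skmult_gen_self: "skmult n (gen l) (gen l) = mono_elt (sq_exp l)"
  by (simp add: gen_eq_mono_elt skmult_mono_elt skew_sign_unit_exp smul_one sq_exp_def)

lemma dgen_eq_sum_sq_exp: "dgen n M i = (\<Sum>l<n. smul (M $$ (i,l)) (mono_elt (sq_exp l)))"
  unfolding dgen_def skmult_gen_self ..

section \<open>The differential of a monomial\<close>

lemma word_Suc: "word (Suc n) a = word n a @ replicate (a n) n"
  unfolding word_def by simp
lemma word_0: "word 0 a = []" unfolding word_def by simp

lemma set_word: "set (word n a) \<subseteq> {..<n}"
  by (induction n) (auto simp: word_Suc word_0)

lemma sorted_word: "sorted (word n a)"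
proof (induction n)
  case 0 then show ?case by (simp add: word_0)
next
  case (Suc n)
  then show ?case using set_word[of n a] by (auto simp: word_Suc sorted_append)
qed

lemma count_list_replicate: "count_list (replicate m x) y = (if x = y then m else 0)"
  by (induction m) auto

lemma count_list_word: "count_list (word n a) i = (if i < n then a i else 0)"
  by (induction n) (auto simp: word_Suc word_0 count_list_replicate)

lemma length_word: "length (word n a) = (\<Sum>i<n. a i)"
  by (induction n) (auto simp: word_Suc word_0)

lemma count_list_word_mons: "a \<in> mons n \<Longrightarrow> (\<lambda>i. count_list (word n a) i) = a"
  unfolding count_list_word mons_def by (rule ext) auto

lemma oneA_eq_mono_elt: "oneA = mono_elt (\<lambda>_. 0)" unfolding oneA_def mono_elt_def ..

lemma prodl_sorted_eq_mono_elt: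
  "sorted ws \<Longrightarrow> set ws \<subseteq> {..<n} \<Longrightarrow> prodl n ws = mono_elt (\<lambda>i. count_list ws i)"
proof (induction ws)
  case Nil
  then show ?case by (simp add: prodl_def oneA_eq_mono_elt)
next
  case (Cons w ws)
  have ih: "prodl n ws = (mono_elt (\<lambda>i. count_list ws i) :: 'a elt)" using Cons by auto
  have "prodl n (w # ws) = (skmult n (gen w) (prodl n ws) :: 'a elt)" by (simp add: prodl_def)
  also have "\<dots> = smul (skew_sign n (unit_exp w) (\<lambda>i. count_list ws i)) (mono_elt (\<lambda>i. unit_exp w i + count_list ws i))"
    by (simp add: ih gen_eq_mono_elt skmult_mono_elt)
  also have "skew_sign n (unit_exp w) (\<lambda>i. count_list ws i) = 1"
  proof (rule skew_sign_eq_1_if_sorted)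
    fix i j assume "i < n" "j < i"
    show "unit_exp w i * count_list ws j = 0"
    proof (cases "i = w")
      case True
      then have "j \<notin> set ws" using Cons.prems \<open>j < i\<close> by auto
      then show ?thesis by simp
    qed (simp add: unit_exp_def)
  qed
  also have "(\<lambda>i. unit_exp w i + count_list ws i) = (\<lambda>i. count_list (w # ws) i)"
    by (auto simp: unit_exp_def)
  finally show ?case by (simp add: smul_one)
qed

definition exp_subst :: "(nat \<Rightarrow> nat) \<Rightarrow> nat \<Rightarrow> nat \<Rightarrow> nat \<Rightarrow> nat" where
  "exp_subst a i l = (\<lambda>x. a x - unit_exp i x + sq_exp l x)"
definition exp_prefix :: "(nat \<Rightarrow> nat) \<Rightarrow> nat \<Rightarrow> nat" where
  "exp_prefix a i = (\<Sum>j<i. a j)"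
definition dterm :: "nat \<Rightarrow> 'a::field mat \<Rightarrow> (nat \<Rightarrow> nat) \<Rightarrow> nat \<Rightarrow> 'a elt" where
  "dterm n M a i = (\<Sum>l<n. smul (M $$ (i,l)) (mono_elt (exp_subst a i l)))"
text \<open>
  The closed form of the Leibniz-rule differential of x^a: only generators with odd exponent
  contribute, x_i contributing (-1)^(a_0 + ... + a_(i-1)) x^(a - e_i) \<partial>(x_i). The truncated
  subtraction in exp_subst is harmless since it is only used where a_i is odd.
\<close>
definition dmono_closed :: "nat \<Rightarrow> 'a::field mat \<Rightarrow> (nat \<Rightarrow> nat) \<Rightarrow> 'a elt" where
  "dmono_closed n M a = (\<Sum>i<n. smul (if odd (a i) then (-1)^(exp_prefix a i) else 0) (dterm n M a i))"

lemma count_list_mons: "set ws \<subseteq> {..<n} \<Longrightarrow> (\<lambda>x. count_list ws x) \<in> mons n"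
  unfolding mons_def by (auto intro!: count_notin)

lemma add_mons: "u \<in> mons n \<Longrightarrow> v \<in> mons n \<Longrightarrow> (\<lambda>x. u x + v x) \<in> mons n"
  unfolding mons_def by auto

lemma skmult_mono_elt_dgen_mono_elt:
  fixes M :: "'a::field mat"
  assumes um: "u \<in> mons n" and vm: "v \<in> mons n" and suv: "skew_sign n u v = (1::'a)"
    and dec: "\<And>x. u x + v x + unit_exp i x = a x"
  shows "skmult n (skmult n (mono_elt u) (dgen n M i)) (mono_elt v) = dterm n M a i"
proof -
  have sq: "l \<in> {..<n} \<Longrightarrow> mono_elt (sq_exp l) \<in> carrierA n" for l
    by (simp add: mono_elt_carrierA sq_exp_mons)
  have usq: "l \<in> {..<n} \<Longrightarrow> (mono_elt (\<lambda>x. u x + sq_exp l x) :: 'a elt) \<in> carrierA n" for l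
    by (rule mono_elt_carrierA, rule add_mons[OF um sq_exp_mons]) simp
  have "skmult n (mono_elt u) (dgen n M i)
      = (\<Sum>l<n. smul (M $$ (i,l)) (skmult n (mono_elt u) (mono_elt (sq_exp l))))"
    unfolding dgen_eq_sum_sq_exp by (rule skmult_sum_right[OF sq mono_elt_carrierA[OF um]])
  also have "\<dots> = (\<Sum>l<n. smul (M $$ (i,l)) (mono_elt (\<lambda>x. u x + sq_exp l x)))"
    by (simp add: skmult_mono_elt skew_sign_sq_exp_right smul_one)
  finally have "skmult n (skmult n (mono_elt u) (dgen n M i)) (mono_elt v)
      = (\<Sum>l<n. smul (M $$ (i,l)) (skmult n (mono_elt (\<lambda>x. u x + sq_exp l x)) (mono_elt v)))"
    by (simp only: skmult_sum_left[OF usq mono_elt_carrierA[OF vm]])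
  also have "\<dots> = (\<Sum>l<n. smul (M $$ (i,l)) (mono_elt (exp_subst a i l)))"
  proof (rule sum.cong[OF refl])
    fix l
    have "(\<lambda>x. u x + sq_exp l x + v x) = exp_subst a i l" unfolding exp_subst_def
      by (rule ext) (metis dec add.commute add.left_commute add_diff_cancel_right')
    then show "smul (M $$ (i,l)) (skmult n (mono_elt (\<lambda>x. u x + sq_exp l x)) (mono_elt v))
        = smul (M $$ (i,l)) (mono_elt (exp_subst a i l))"
      by (simp add: skmult_mono_elt skew_sign_sq_exp_left suv smul_one)
  qed
  finally show ?thesis unfolding dterm_def .
qed

lemma dmono_summand_eq_dterm:
  fixes M :: "'a::field mat"
  assumes a: "a \<in> mons n" and w: "w = word n a" and k: "k < length w"
  shows "skmult n (skmult n (prodl n (take k w)) (dgen n M (w!k))) (prodl n (drop (Suc k) w))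
    = dterm n M a (w!k)"
proof -
  define u where "u = (\<lambda>x. count_list (take k w) x)"
  define v where "v = (\<lambda>x. count_list (drop (Suc k) w) x)"
  have sw: "sorted w" and setw: "set w \<subseteq> {..<n}" using w sorted_word set_word by auto
  have st: "set (take k w) \<subseteq> {..<n}" using setw set_take_subset by fastforce
  have sd: "set (drop (Suc k) w) \<subseteq> {..<n}" using setw set_drop_subset by fastforce
  have pu: "prodl n (take k w) = (mono_elt u :: 'a elt)" unfolding u_def
    by (rule prodl_sorted_eq_mono_elt) (use sw st in auto)
  have pv: "prodl n (drop (Suc k) w) = (mono_elt v :: 'a elt)" unfolding v_def
    by (rule prodl_sorted_eq_mono_elt) (use sw sd in auto)
  have um: "u \<in> mons n" unfolding u_def by (rule count_list_mons[OF st])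
  have vm: "v \<in> mons n" unfolding v_def by (rule count_list_mons[OF sd])
  have dec: "u x + v x + unit_exp (w ! k) x = a x" for x
  proof -
    have "count_list w x = count_list (take k w) x + count_list (w ! k # drop (Suc k) w) x"
      using id_take_nth_drop[OF k] by (metis count_list_append)
    moreover have "count_list w x = a x" using count_list_word_mons[OF a] w by metis
    ultimately show ?thesis unfolding u_def v_def unit_exp_def by auto
  qed
  have suv: "skew_sign n u v = (1::'a)"
  proof (rule skew_sign_eq_1_if_sorted)
    fix x y assume "x < n" "y < x"
    show "u x * v y = 0"
    proof (rule ccontr)
      assume "u x * v y \<noteq> 0"
      then have "x \<in> set (take k w)" "y \<in> set (drop (Suc k) w)" unfolding u_def v_def
        by (auto simp: count_list_0_iff)
      moreover have "set (drop (Suc k) w) \<subseteq> set (drop k w)" by (rule set_drop_subset_set_drop) simp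
      moreover have "sorted (take k w @ drop k w)" using sw by simp
      ultimately have "x \<le> y" unfolding sorted_append by blast
      then show False using \<open>y < x\<close> by simp
    qed
  qed
  show ?thesis unfolding pu pv by (rule skmult_mono_elt_dgen_mono_elt[OF um vm suv dec])
qed

lemma dmono_eq_sum_dterm:
  fixes M :: "'a::field mat"
  assumes a: "a \<in> mons n"
  shows "dmono n M a = (\<Sum>k<length (word n a). smul ((-1)^k) (dterm n M a (word n a ! k)))"
  unfolding dmono_def Let_def
  by (rule sum.cong[OF refl]) (simp add: dmono_summand_eq_dterm[OF a refl])

lemma sum_lessThan_add: "(\<Sum>k<x + (y::nat). f k) = (\<Sum>k<x. f k) + (\<Sum>k<y. f (x + k))"
  by (induction y) (auto simp: add.assoc)

lemma sum_alternating_sign: "(\<Sum>k<m. (-1::'a::ring_1)^(L + k)) = (-1)^L * (if odd m then 1 else 0)"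
proof (induction m)
  case (Suc m)
  then show ?case by (cases "odd m") (auto simp: power_add)
qed simp

lemma sum_alternating_word:
  fixes H :: "nat \<Rightarrow> 'a::field elt"
  shows "(\<Sum>k<length (word n a). smul ((-1)^k) (H (word n a ! k)))
       = (\<Sum>i<n. smul (if odd (a i) then (-1)^(exp_prefix a i) else 0) (H i))"
proof (induction n)
  case 0 then show ?case by (simp add: word_0)
next
  case (Suc n)
  let ?w = "word n a" and ?r = "replicate (a n) n"
  have "(\<Sum>k<length (word (Suc n) a). smul ((-1)^k) (H (word (Suc n) a ! k)))
      = (\<Sum>k<length ?w. smul ((-1)^k) (H ((?w @ ?r) ! k))) + (\<Sum>k<a n. smul ((-1)^(length ?w + k)) (H ((?w @ ?r) ! (length ?w + k))))"
    unfolding word_Suc length_append length_replicate sum_lessThan_add ..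
  also have "(\<Sum>k<length ?w. smul ((-1)^k) (H ((?w @ ?r) ! k))) = (\<Sum>k<length ?w. smul ((-1)^k) (H (?w ! k)))"
    by (rule sum.cong) (auto simp: nth_append)
  also have "(\<Sum>k<a n. smul ((-1)^(length ?w + k)) (H ((?w @ ?r) ! (length ?w + k)))) = (\<Sum>k<a n. smul ((-1)^(length ?w + k)) (H n))"
    by (rule sum.cong) (auto simp: nth_append)
  also have "\<dots> = smul ((-1)^(length ?w) * (if odd (a n) then 1 else 0)) (H n)"
    by (simp add: smul_sum_left sum_alternating_sign)
  also have "\<dots> = smul (if odd (a n) then (-1)^(exp_prefix a n) else 0) (H n)"
    unfolding length_word exp_prefix_def by simp
  also have "(\<Sum>k<length ?w. smul ((-1)^k) (H (?w ! k))) = (\<Sum>i<n. smul (if odd (a i) then (-1)^(exp_prefix a i) else 0) (H i))"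
    by (rule Suc.IH)
  finally show ?case by (simp only: sum.lessThan_Suc)
qed

lemma dmono_eq_closed:
  fixes M :: "'a::field mat"
  assumes a: "a \<in> mons n"
  shows "dmono n M a = dmono_closed n M a"
  unfolding dmono_eq_sum_dterm[OF a] sum_alternating_word dmono_closed_def ..

lemma dmono_closed_unit_exp:
  fixes M :: "'a::field mat"
  assumes j: "j < n"
  shows "dmono_closed n M (unit_exp j) = (\<Sum>l<n. smul (M $$ (j,l)) (mono_elt (sq_exp l)))"
proof -
  have "dmono_closed n M (unit_exp j) = (\<Sum>i<n. if i = j then dterm n M (unit_exp j) j else 0)"
    unfolding dmono_closed_def by (rule sum.cong) (auto simp: unit_exp_def exp_prefix_def smul_one smul_zero)
  also have "\<dots> = dterm n M (unit_exp j) j" using j by simp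
  also have "\<dots> = (\<Sum>l<n. smul (M $$ (j,l)) (mono_elt (sq_exp l)))"
    unfolding dterm_def exp_subst_def by simp
  finally show ?thesis .
qed

lemma carrierA_comp:
  assumes x: "x \<in> carrierA n" and inv: "\<And>i. \<tau> (\<tau>' i) = i" and fix_out: "\<And>i. n \<le> i \<Longrightarrow> \<tau> i = i"
  shows "(\<lambda>b. h b * x (b \<circ> \<tau>)) \<in> carrierA n"
proof -
  have "b = b \<circ> \<tau> \<circ> \<tau>'" for b :: "nat \<Rightarrow> nat" using inv by (simp add: fun_eq_iff)
  then have "{b. h b * x (b \<circ> \<tau>) \<noteq> 0} \<subseteq> (\<lambda>a. a \<circ> \<tau>') ` {a. x a \<noteq> 0}" by auto
  then have "finite {b. h b * x (b \<circ> \<tau>) \<noteq> 0}"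
    using carrierA_finite_support[OF x] finite_subset by blast
  moreover have "b \<in> mons n" if "h b * x (b \<circ> \<tau>) \<noteq> 0" for b
    using carrierA_support_mons[OF x, of "b \<circ> \<tau>"] that fix_out unfolding mons_def by auto
  ultimately show ?thesis unfolding carrierA_def by auto
qed

section \<open>Quasi-permutation automorphisms\<close>

text \<open>
  The data of a quasi-permutation matrix: C(i, \<sigma> i) = c i, with \<sigma> a permutation of
  {..<n} extended by the identity and \<sigma>' its inverse.
\<close>
locale signed_perm =
  fixes n :: nat and \<sigma> \<sigma>' :: "nat \<Rightarrow> nat" and c :: "nat \<Rightarrow> 'a::field"
  assumes perm_less: "i < n \<Longrightarrow> \<sigma> i < n" and perm_inv_less: "i < n \<Longrightarrow> \<sigma>' i < n"
    and perm_out: "n \<le> i \<Longrightarrow> \<sigma> i = i" and perm_inv_out: "n \<le> i \<Longrightarrow> \<sigma>' i = i"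
    and perm_inv_perm: "\<sigma>' (\<sigma> i) = i" and perm_perm_inv: "\<sigma> (\<sigma>' i) = i"
    and coeff_nonzero: "i < n \<Longrightarrow> c i \<noteq> 0"
begin

lemma perm_bij: "bij_betw \<sigma> {..<n} {..<n}"
  by (rule bij_betw_byWitness[where f'=\<sigma>']) (auto simp: perm_inv_perm perm_perm_inv perm_less perm_inv_less image_subset_iff)

lemma sum_reindex_perm: "(\<Sum>i<n. g (\<sigma> i)) = (\<Sum>i<n. g i)"
  using sum.reindex_bij_betw[OF perm_bij] .

lemma perm_eq_iff: "\<sigma> i = \<sigma> j \<longleftrightarrow> i = j"
  by (metis perm_inv_perm)

lemma comp_perm_inv_perm[simp]: "(u \<circ> \<sigma>') \<circ> \<sigma> = u" by (rule ext) (simp add: perm_inv_perm)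
lemma comp_perm_perm_inv[simp]: "(u \<circ> \<sigma>) \<circ> \<sigma>' = u" by (rule ext) (simp add: perm_perm_inv)

lemma comp_perm_mons: "u \<in> mons n \<Longrightarrow> u \<circ> \<sigma> \<in> mons n" "u \<in> mons n \<Longrightarrow> u \<circ> \<sigma>' \<in> mons n"
  unfolding mons_def by (auto simp: perm_out perm_inv_out)

lemma degm_comp_perm: "degm n (b \<circ> \<sigma>) = degm n b"
  unfolding degm_def using sum_reindex_perm[of b] by simp

definition inversions :: "(nat \<Rightarrow> nat) \<Rightarrow> nat" where
  "inversions a = (\<Sum>i<n. \<Sum>j<n. if i < j \<and> \<sigma> j < \<sigma> i then a i * a j else 0)"
definition cross_inversions :: "(nat \<Rightarrow> nat) \<Rightarrow> (nat \<Rightarrow> nat) \<Rightarrow> nat" where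
  "cross_inversions u v = (\<Sum>i<n. \<Sum>j<n. if i < j \<and> \<sigma> j < \<sigma> i then u i * v j + v i * u j else 0)"
text \<open>
  Reordering the product of the images c_i x_\<sigma>(i) of the factors of x^a into increasing
  order of generators costs one sign per pair of factors whose order \<sigma> reverses.
\<close>
definition perm_coeff :: "(nat \<Rightarrow> nat) \<Rightarrow> 'a" where
  "perm_coeff a = (\<Prod>i<n. c i ^ a i) * (-1)^(inversions a)"
definition perm_map :: "'a elt \<Rightarrow> 'a elt" where
  "perm_map x = (\<lambda>b. perm_coeff (b \<circ> \<sigma>) * x (b \<circ> \<sigma>))"

lemma inversions_add: "inversions (\<lambda>x. u x + v x) = inversions u + inversions v + cross_inversions u v"
proof -
  have "inversions (\<lambda>x. u x + v x) = (\<Sum>i<n. \<Sum>j<n. (if i < j \<and> \<sigma> j < \<sigma> i then u i * u j else 0)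
     + (if i < j \<and> \<sigma> j < \<sigma> i then v i * v j else 0) + (if i < j \<and> \<sigma> j < \<sigma> i then u i * v j + v i * u j else 0))"
    unfolding inversions_def by (intro sum.cong refl) (auto simp: algebra_simps)
  then show ?thesis unfolding inversions_def cross_inversions_def by (simp add: sum.distrib)
qed

lemma inversions_unit_exp: "inversions (unit_exp i) = 0"
  unfolding inversions_def unit_exp_def by (auto intro!: sum.neutral)
lemma inversions_sq_exp: "inversions (sq_exp i) = 0"
  unfolding inversions_def sq_exp_def unit_exp_def by (auto intro!: sum.neutral)
lemma cross_inversions_sq_exp: "cross_inversions u (sq_exp l) = 2 * cross_inversions u (unit_exp l)"
  unfolding cross_inversions_def sq_exp_def sum_distrib_left
  by (intro sum.cong refl) (auto simp: algebra_simps)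

lemma prod_power_coeff_nonzero: "(\<Prod>i<n. c i ^ a i) \<noteq> 0"
  using coeff_nonzero by (simp add: prod_zero_iff)

lemma perm_coeff_nonzero: "perm_coeff a \<noteq> 0"
  unfolding perm_coeff_def using prod_power_coeff_nonzero by simp

lemma prod_power_add: "(\<Prod>k<n. c k ^ (u k + v k)) = (\<Prod>k<n. c k ^ u k) * (\<Prod>k<n. c k ^ v k)"
  by (simp add: power_add prod.distrib)

lemma prod_power_coeff_unit_exp: "i < n \<Longrightarrow> (\<Prod>k<n. c k ^ unit_exp i k) = c i"
proof -
  assume i: "i < n"
  have "(\<Prod>k<n. c k ^ unit_exp i k) = (\<Prod>k<n. if k = i then c k else 1)"
    by (rule prod.cong) (auto simp: unit_exp_def)
  then show ?thesis using i by (simp add: prod.delta)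
qed

lemma prod_power_coeff_sq_exp: "i < n \<Longrightarrow> (\<Prod>k<n. c k ^ sq_exp i k) = c i ^ 2"
proof -
  assume i: "i < n"
  have "(\<Prod>k<n. c k ^ sq_exp i k) = (\<Prod>k<n. c k ^ unit_exp i k) * (\<Prod>k<n. c k ^ unit_exp i k)"
    unfolding sq_exp_def by (rule prod_power_add)
  then show ?thesis using prod_power_coeff_unit_exp[OF i] by (simp add: power2_eq_square)
qed

lemma inversions_zero: "inversions (\<lambda>_. 0) = 0"
  unfolding inversions_def by (auto intro!: sum.neutral)
lemma perm_coeff_zero: "perm_coeff (\<lambda>_. 0) = 1"
  unfolding perm_coeff_def inversions_zero by simp

lemma perm_coeff_unit_exp: "i < n \<Longrightarrow> perm_coeff (unit_exp i) = c i"
  unfolding perm_coeff_def inversions_unit_exp by (simp add: prod_power_coeff_unit_exp)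

lemma perm_map_add: "perm_map (x + y) = perm_map x + perm_map y"
  unfolding perm_map_def by (rule ext) (simp add: algebra_simps)
lemma perm_map_smul: "perm_map (smul k x) = smul k (perm_map x)"
  unfolding perm_map_def by (rule ext) (simp add: smul_apply algebra_simps)
lemma perm_map_sum: "perm_map (\<Sum>i\<in>I. g i) = (\<Sum>i\<in>I. perm_map (g i))"
  unfolding perm_map_def by (rule ext) (simp add: sum_apply sum_distrib_left)
lemma perm_map_mono_elt: "perm_map (mono_elt u) = smul (perm_coeff u) (mono_elt (u \<circ> \<sigma>'))"
  unfolding perm_map_def by (rule ext) (auto simp: mono_elt_apply smul_apply)
lemma perm_map_oneA: "perm_map oneA = oneA"
proof -
  have "(\<lambda>_. 0::nat) \<circ> \<sigma>' = (\<lambda>_. 0)" by auto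
  then show ?thesis unfolding oneA_eq_mono_elt perm_map_mono_elt perm_coeff_zero smul_one by simp
qed

lemma unit_exp_comp_perm_inv: "unit_exp i \<circ> \<sigma>' = unit_exp (\<sigma> i)"
  unfolding unit_exp_def by (rule ext) (auto simp: perm_perm_inv perm_inv_perm)
lemma sq_exp_comp_perm_inv: "sq_exp i \<circ> \<sigma>' = sq_exp (\<sigma> i)"
  using unit_exp_comp_perm_inv[of i] unfolding sq_exp_def by (auto simp: fun_eq_iff)

lemma perm_map_gen: "i < n \<Longrightarrow> perm_map (gen i) = smul (c i) (gen (\<sigma> i))"
  unfolding gen_eq_mono_elt perm_map_mono_elt unit_exp_comp_perm_inv by (simp add: perm_coeff_unit_exp)

lemma perm_map_apply_comp: "perm_map x (a \<circ> \<sigma>') = perm_coeff a * x a"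
  unfolding perm_map_def by simp

lemma perm_map_carrierA: "x \<in> carrierA n \<Longrightarrow> perm_map x \<in> carrierA n"
  unfolding perm_map_def by (rule carrierA_comp[where \<tau>'=\<sigma>']) (simp_all add: perm_perm_inv perm_out)

lemma perm_map_bij: "bij_betw perm_map (carrierA n) (carrierA n)"
proof (rule bij_betw_imageI)
  show "inj_on perm_map (carrierA n)"
  proof (rule inj_onI)
    fix x y assume "perm_map x = perm_map y"
    then have "perm_map x (a \<circ> \<sigma>') = perm_map y (a \<circ> \<sigma>')" for a by simp
    then show "x = y" unfolding perm_map_apply_comp using perm_coeff_nonzero by auto
  qed
  show "perm_map ` carrierA n = carrierA n"
  proof
    show "perm_map ` carrierA n \<subseteq> carrierA n" using perm_map_carrierA by auto
    show "carrierA n \<subseteq> perm_map ` carrierA n"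
    proof
      fix y :: "'a elt" assume y: "y \<in> carrierA n"
      define x where "x = (\<lambda>a. inverse (perm_coeff a) * y (a \<circ> \<sigma>'))"
      have "x \<in> carrierA n" unfolding x_def
        by (rule carrierA_comp[OF y, where \<tau>'=\<sigma>]) (simp_all add: perm_inv_perm perm_inv_out)
      moreover have "perm_map x = y" unfolding perm_map_def x_def using perm_coeff_nonzero by auto
      ultimately show "y \<in> perm_map ` carrierA n" by blast
    qed
  qed
qed

lemma perm_map_homog: "homog n d x \<Longrightarrow> homog n d (perm_map x)"
  unfolding homog_def perm_map_def using degm_comp_perm by auto


lemma sum_lessThan_eq_if: "i \<le> n \<Longrightarrow> (\<Sum>j<i. f j) = (\<Sum>j<n. if j < i then f j else 0)"
proof -
  assume "i \<le> n"
  show ?thesis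
    by (rule sym, rule sum.mono_neutral_cong_right) (use \<open>i \<le> n\<close> in auto)
qed

lemma inversion_indicator_identity:
  assumes "i < n" "j < n"
  shows "(if j < i then p else 0) + (if i < j \<and> \<sigma> j < \<sigma> i then p else 0) + (if j < i \<and> \<sigma> i < \<sigma> j then p else 0)
    = (if \<sigma> j < \<sigma> i then p else 0) + 2 * (if j < i \<and> \<sigma> i < \<sigma> j then (p::nat) else 0)"
proof -
  have "i \<noteq> j \<Longrightarrow> \<sigma> i \<noteq> \<sigma> j" using perm_eq_iff by auto
  then show ?thesis by (cases "i < j"; cases "j < i"; cases "\<sigma> i < \<sigma> j"; cases "\<sigma> j < \<sigma> i") auto
qed

lemma skew_exponent_comp_perm:
  fixes a b :: "nat \<Rightarrow> nat"
  defines "S \<equiv> (\<Sum>i<n. \<Sum>j<i. a i * b j)"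
    and "S' \<equiv> (\<Sum>i<n. \<Sum>j<i. (a \<circ> \<sigma>') i * (b \<circ> \<sigma>') j)"
    and "K \<equiv> (\<Sum>i<n. \<Sum>j<n. if j < i \<and> \<sigma> i < \<sigma> j then a i * b j else 0)"
  shows "S + cross_inversions a b = S' + 2 * K"
proof -
  have S: "S = (\<Sum>i<n. \<Sum>j<n. if j < i then a i * b j else 0)"
    unfolding S_def by (rule sum.cong[OF refl]) (rule sum_lessThan_eq_if, simp)
  have "S' = (\<Sum>i<n. \<Sum>j<n. if j < i then a (\<sigma>' i) * b (\<sigma>' j) else 0)"
    unfolding S'_def comp_def by (rule sum.cong[OF refl]) (rule sum_lessThan_eq_if, simp)
  also have "\<dots> = (\<Sum>i<n. \<Sum>j<n. if j < \<sigma> i then a (\<sigma>' (\<sigma> i)) * b (\<sigma>' j) else 0)"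
    by (rule sym, rule sum_reindex_perm)
  also have "\<dots> = (\<Sum>i<n. \<Sum>j<n. if j < \<sigma> i then a i * b (\<sigma>' j) else 0)"
    by (simp only: perm_inv_perm)
  also have "\<dots> = (\<Sum>i<n. \<Sum>j<n. if \<sigma> j < \<sigma> i then a i * b j else 0)"
  proof (rule sum.cong[OF refl])
    fix i
    show "(\<Sum>j<n. if j < \<sigma> i then a i * b (\<sigma>' j) else 0) = (\<Sum>j<n. if \<sigma> j < \<sigma> i then a i * b j else 0)"
      by (rule trans[OF sum_reindex_perm[symmetric]]) (simp only: perm_inv_perm)
  qed
  finally have S': "S' = \<dots>" .
  have "cross_inversions a b = (\<Sum>i<n. \<Sum>j<n. if i < j \<and> \<sigma> j < \<sigma> i then a i * b j else 0)
      + (\<Sum>i<n. \<Sum>j<n. if i < j \<and> \<sigma> j < \<sigma> i then b i * a j else 0)"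
    unfolding cross_inversions_def sum.distrib[symmetric] by (intro sum.cong refl) auto
  also have "(\<Sum>i<n. \<Sum>j<n. if i < j \<and> \<sigma> j < \<sigma> i then b i * a j else 0)
     = (\<Sum>i<n. \<Sum>j<n. if j < i \<and> \<sigma> i < \<sigma> j then a i * b j else 0)"
    by (rule trans[OF sum.swap]) (intro sum.cong refl, simp add: mult.commute)
  finally have X: "cross_inversions a b = (\<Sum>i<n. \<Sum>j<n. if i < j \<and> \<sigma> j < \<sigma> i then a i * b j else 0)
      + (\<Sum>i<n. \<Sum>j<n. if j < i \<and> \<sigma> i < \<sigma> j then a i * b j else 0)" .
  have "S + cross_inversions a b = (\<Sum>i<n. \<Sum>j<n. (if j < i then a i * b j else 0) + (if i < j \<and> \<sigma> j < \<sigma> i then a i * b j else 0)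
      + (if j < i \<and> \<sigma> i < \<sigma> j then a i * b j else 0))"
    unfolding S X by (simp add: sum.distrib)
  also have "\<dots> = (\<Sum>i<n. \<Sum>j<n. (if \<sigma> j < \<sigma> i then a i * b j else 0)
      + 2 * (if j < i \<and> \<sigma> i < \<sigma> j then a i * b j else 0))"
    by (intro sum.cong refl) (simp add: inversion_indicator_identity)
  also have "\<dots> = S' + 2 * K" unfolding S' K_def by (simp add: sum.distrib sum_distrib_left)
  finally show ?thesis .
qed

lemma perm_coeff_skew_sign:
  "skew_sign n (a \<circ> \<sigma>') (b \<circ> \<sigma>') * perm_coeff a * perm_coeff b = perm_coeff (\<lambda>i. a i + b i) * skew_sign n a b"
proof -
  define S where "S = (\<Sum>i<n. \<Sum>j<i. a i * b j)"
  define S' where "S' = (\<Sum>i<n. \<Sum>j<i. (a \<circ> \<sigma>') i * (b \<circ> \<sigma>') j)"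
  define K where "K = (\<Sum>i<n. \<Sum>j<n. if j < i \<and> \<sigma> i < \<sigma> j then a i * b j else 0)"
  have eq: "S + cross_inversions a b = S' + 2 * K" unfolding S_def S'_def K_def by (rule skew_exponent_comp_perm)
  have sg: "(-1::'a)^(inversions a + inversions b + cross_inversions a b + S) = (-1)^(inversions a + inversions b + S')"
    by (rule minus_one_power_parity_cong[where k=0 and l=K]) (use eq in simp)
  have sg2: "(-1::'a)^S' * (-1)^(inversions a) * (-1)^(inversions b) = (-1)^(inversions a + inversions b + cross_inversions a b) * (-1)^S"
    using sg by (simp add: power_add mult_ac)
  have "skew_sign n (a \<circ> \<sigma>') (b \<circ> \<sigma>') * perm_coeff a * perm_coeff b
     = ((\<Prod>k<n. c k ^ a k) * (\<Prod>k<n. c k ^ b k)) * ((-1::'a)^S' * (-1)^(inversions a) * (-1)^(inversions b))"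
    unfolding skew_sign_def perm_coeff_def S'_def by (simp add: mult_ac)
  also have "\<dots> = ((\<Prod>k<n. c k ^ a k) * (\<Prod>k<n. c k ^ b k)) * ((-1)^(inversions a + inversions b + cross_inversions a b) * (-1)^S)"
    by (simp only: sg2)
  also have "\<dots> = perm_coeff (\<lambda>i. a i + b i) * skew_sign n a b"
    unfolding perm_coeff_def inversions_add skew_sign_def S_def prod_power_add by (simp add: mult_ac)
  finally show ?thesis .
qed

lemma comp_perm_eq_iff: "f \<circ> \<sigma> = g \<circ> \<sigma> \<longleftrightarrow> f = g"
  by (metis comp_perm_perm_inv)

lemma perm_map_support: "perm_map x b \<noteq> 0 \<longleftrightarrow> x (b \<circ> \<sigma>) \<noteq> 0"
  unfolding perm_map_def using perm_coeff_nonzero by simp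

lemma bij_betw_comp_perm_inv: "bij_betw (\<lambda>a. a \<circ> \<sigma>') {a. Q a} {b. Q (b \<circ> \<sigma>)}"
  by (rule bij_betw_byWitness[where f'="\<lambda>b. b \<circ> \<sigma>"]) auto

lemma bij_betw_comp_perm_inv_pairs:
  "bij_betw (\<lambda>(a, b). (a \<circ> \<sigma>', b \<circ> \<sigma>')) {(a, b). Q a b} {(a, b). Q (a \<circ> \<sigma>) (b \<circ> \<sigma>)}"
  by (rule bij_betw_byWitness[where f'="\<lambda>(a, b). (a \<circ> \<sigma>, b \<circ> \<sigma>)"]) auto

lemma perm_map_skmult: "perm_map (skmult n x y) = skmult n (perm_map x) (perm_map y)"
proof (rule ext)
  fix c0
  define Q where "Q = (\<lambda>a b. x a \<noteq> 0 \<and> y b \<noteq> 0 \<and> (\<lambda>i. a i + b i) = c0 \<circ> \<sigma>)"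
  have "(\<lambda>i. (a \<circ> \<sigma>) i + (b \<circ> \<sigma>) i) = c0 \<circ> \<sigma> \<longleftrightarrow> (\<lambda>i. a i + b i) = c0" for a b
    using comp_perm_eq_iff[of "\<lambda>i. a i + b i" c0] by (simp add: comp_def)
  then have supp: "{(a, b). perm_map x a \<noteq> 0 \<and> perm_map y b \<noteq> 0 \<and> (\<lambda>i. a i + b i) = c0}
      = {(a, b). Q (a \<circ> \<sigma>) (b \<circ> \<sigma>)}"
    unfolding Q_def perm_map_support by auto
  have "skmult n (perm_map x) (perm_map y) c0 = (\<Sum>p\<in>{(a, b). Q (a \<circ> \<sigma>) (b \<circ> \<sigma>)}.
      (\<lambda>(a, b). skew_sign n a b * perm_map x a * perm_map y b) p)"
    unfolding skmult_def supp ..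
  also have "\<dots> = (\<Sum>p\<in>{(a, b). Q a b}. (\<lambda>(a, b). skew_sign n a b * perm_map x a * perm_map y b)
      ((\<lambda>(a, b). (a \<circ> \<sigma>', b \<circ> \<sigma>')) p))"
    by (rule sum.reindex_bij_betw[OF bij_betw_comp_perm_inv_pairs, symmetric])
  also have "\<dots> = (\<Sum>(a, b)\<in>{(a, b). Q a b}. perm_coeff (c0 \<circ> \<sigma>) * (skew_sign n a b * x a * y b))"
  proof (rule sum.cong[OF refl])
    fix p assume "p \<in> {(a, b). Q a b}"
    then obtain a b where p: "p = (a, b)" and "Q a b" by auto
    then have "c0 \<circ> \<sigma> = (\<lambda>i. a i + b i)" unfolding Q_def by auto
    then show "(\<lambda>(a, b). skew_sign n a b * perm_map x a * perm_map y b) ((\<lambda>(a, b). (a \<circ> \<sigma>', b \<circ> \<sigma>')) p)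
        = (\<lambda>(a, b). perm_coeff (c0 \<circ> \<sigma>) * (skew_sign n a b * x a * y b)) p"
      unfolding p using perm_coeff_skew_sign[of a b] by (simp add: perm_map_apply_comp mult_ac)
  qed
  also have "\<dots> = perm_map (skmult n x y) c0"
    unfolding perm_map_def skmult_def Q_def by (simp add: sum_distrib_left case_prod_unfold)
  finally show "perm_map (skmult n x y) c0 = skmult n (perm_map x) (perm_map y) c0" by simp
qed

lemma exp_subst_comp_perm_inv: "exp_subst a i l \<circ> \<sigma>' = exp_subst (a \<circ> \<sigma>') (\<sigma> i) (\<sigma> l)"
proof (rule ext)
  fix x
  have "unit_exp i (\<sigma>' x) = unit_exp (\<sigma> i) x" using fun_cong[OF unit_exp_comp_perm_inv[of i], of x] by simp
  moreover have "sq_exp l (\<sigma>' x) = sq_exp (\<sigma> l) x" using fun_cong[OF sq_exp_comp_perm_inv[of l], of x] by simp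
  ultimately show "(exp_subst a i l \<circ> \<sigma>') x = exp_subst (a \<circ> \<sigma>') (\<sigma> i) (\<sigma> l) x" unfolding exp_subst_def by simp
qed

lemma sum_if_mult_unit_exp: "i < n \<Longrightarrow> (\<Sum>j<n. if P j then u * unit_exp i j else 0) = (if P i then (u::nat) else 0)"
proof -
  assume i: "i < n"
  have "(\<Sum>j<n. if P j then u * unit_exp i j else 0) = (\<Sum>j<n. if j = i then (if P i then u else 0) else 0)"
    by (rule sum.cong) (auto simp: unit_exp_def)
  then show ?thesis using i by simp
qed

lemma cross_inversions_unit_exp:
  assumes i: "i < n"
  shows "cross_inversions u (unit_exp i) = (\<Sum>j<n. if j < i \<and> \<sigma> i < \<sigma> j then u j else 0)
    + (\<Sum>j<n. if i < j \<and> \<sigma> j < \<sigma> i then u j else 0)"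
proof -
  have 1: "cross_inversions u (unit_exp i) = (\<Sum>i0<n. \<Sum>j<n. if i0 < j \<and> \<sigma> j < \<sigma> i0 then u i0 * unit_exp i j else 0)
     + (\<Sum>i0<n. \<Sum>j<n. if i0 < j \<and> \<sigma> j < \<sigma> i0 then unit_exp i i0 * u j else 0)"
    unfolding cross_inversions_def sum.distrib[symmetric] by (intro sum.cong refl) auto
  have 2: "(\<Sum>i0<n. \<Sum>j<n. if i0 < j \<and> \<sigma> j < \<sigma> i0 then u i0 * unit_exp i j else 0)
      = (\<Sum>j<n. if j < i \<and> \<sigma> i < \<sigma> j then u j else 0)"
    by (rule sum.cong[OF refl]) (simp add: sum_if_mult_unit_exp[OF i])
  have 3: "(\<Sum>i0<n. \<Sum>j<n. if i0 < j \<and> \<sigma> j < \<sigma> i0 then unit_exp i i0 * u j else 0)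
      = (\<Sum>i0<n. if i0 = i then (\<Sum>j<n. if i < j \<and> \<sigma> j < \<sigma> i then u j else 0) else 0)"
  proof (rule sum.cong[OF refl])
    fix i0
    show "(\<Sum>j<n. if i0 < j \<and> \<sigma> j < \<sigma> i0 then unit_exp i i0 * u j else 0)
      = (if i0 = i then (\<Sum>j<n. if i < j \<and> \<sigma> j < \<sigma> i then u j else 0) else 0)"
    proof (cases "i0 = i")
      case True then show ?thesis by (simp add: unit_exp_apply cong: if_cong)
    next
      case False then show ?thesis by (simp add: unit_exp_apply cong: if_cong)
    qed
  qed
  have 4: "(\<Sum>i0<n. if i0 = i then (\<Sum>j<n. if i < j \<and> \<sigma> j < \<sigma> i then u j else 0) else 0)
     = (\<Sum>j<n. if i < j \<and> \<sigma> j < \<sigma> i then u j else 0)" using i by simp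
  show ?thesis unfolding 1 2 3 4 ..
qed

lemma cross_inversions_unit_exp_parity:
  assumes i: "i < n"
  shows "cross_inversions u (unit_exp i) + 2 * (\<Sum>j<n. if j < i \<and> \<sigma> j < \<sigma> i then u j else 0)
    = exp_prefix u i + exp_prefix (u \<circ> \<sigma>') (\<sigma> i)"
proof -
  have p1: "exp_prefix u i = (\<Sum>j<n. if j < i then u j else 0)" unfolding exp_prefix_def by (rule sum_lessThan_eq_if) (use i in simp)
  have "exp_prefix (u \<circ> \<sigma>') (\<sigma> i) = (\<Sum>k<n. if k < \<sigma> i then u (\<sigma>' k) else 0)"
    unfolding exp_prefix_def comp_def by (rule sum_lessThan_eq_if) (use perm_less[OF i] in simp)
  also have "\<dots> = (\<Sum>j<n. if \<sigma> j < \<sigma> i then u (\<sigma>' (\<sigma> j)) else 0)" by (rule sym, rule sum_reindex_perm)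
  also have "\<dots> = (\<Sum>j<n. if \<sigma> j < \<sigma> i then u j else 0)" by (simp only: perm_inv_perm)
  finally have p2: "exp_prefix (u \<circ> \<sigma>') (\<sigma> i) = \<dots>" .
  have pw: "j < n \<Longrightarrow> (if j < i \<and> \<sigma> i < \<sigma> j then u j else 0) + (if i < j \<and> \<sigma> j < \<sigma> i then u j else 0)
     + 2 * (if j < i \<and> \<sigma> j < \<sigma> i then u j else 0) = (if j < i then u j else 0) + (if \<sigma> j < \<sigma> i then u j else 0)" for j
  proof -
    have "i \<noteq> j \<Longrightarrow> \<sigma> i \<noteq> \<sigma> j" using perm_eq_iff by auto
    then show ?thesis by (cases "i < j"; cases "j < i"; cases "\<sigma> i < \<sigma> j"; cases "\<sigma> j < \<sigma> i") auto
  qed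
  have "cross_inversions u (unit_exp i) + 2 * (\<Sum>j<n. if j < i \<and> \<sigma> j < \<sigma> i then u j else 0)
     = (\<Sum>j<n. (if j < i \<and> \<sigma> i < \<sigma> j then u j else 0) + (if i < j \<and> \<sigma> j < \<sigma> i then u j else 0)
     + 2 * (if j < i \<and> \<sigma> j < \<sigma> i then u j else 0))"
    unfolding cross_inversions_unit_exp[OF i] by (simp add: sum.distrib sum_distrib_left)
  also have "\<dots> = (\<Sum>j<n. (if j < i then u j else 0) + (if \<sigma> j < \<sigma> i then u j else 0))"
    by (rule sum.cong[OF refl]) (simp add: pw)
  also have "\<dots> = exp_prefix u i + exp_prefix (u \<circ> \<sigma>') (\<sigma> i)" unfolding p1 p2 by (simp add: sum.distrib)
  finally show ?thesis .
qed

lemma perm_coeff_add_unit_exp: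
  "i < n \<Longrightarrow> perm_coeff (\<lambda>x. u x + unit_exp i x)
    = perm_coeff u * c i * (-1)^(cross_inversions u (unit_exp i))"
  unfolding perm_coeff_def inversions_add inversions_unit_exp prod_power_add
  by (simp add: prod_power_coeff_unit_exp power_add mult_ac)

lemma perm_coeff_add_sq_exp: "l < n \<Longrightarrow> perm_coeff (\<lambda>x. u x + sq_exp l x) = perm_coeff u * c l ^ 2"
  unfolding perm_coeff_def inversions_add inversions_sq_exp prod_power_add cross_inversions_sq_exp
  by (simp add: prod_power_coeff_sq_exp power_add minus_one_power_double mult_ac)

lemma perm_coeff_exp_subst:
  fixes M :: "'a mat"
  assumes HM: "c i * M $$ (\<sigma> i, \<sigma> l) = M $$ (i,l) * c l ^ 2"
    and i: "i < n" and l: "l < n" and ai: "1 \<le> a i"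
  shows "(-1)^(exp_prefix a i) * (M $$ (i,l) * perm_coeff (exp_subst a i l))
    = perm_coeff a * (-1)^(exp_prefix (a \<circ> \<sigma>') (\<sigma> i)) * M $$ (\<sigma> i, \<sigma> l)"
proof -
  define a' where "a' = (\<lambda>x. a x - unit_exp i x)"
  have "a = (\<lambda>x. a' x + unit_exp i x)" unfolding a'_def using ai by (auto simp: unit_exp_def fun_eq_iff)
  then have coeff_a: "perm_coeff a = perm_coeff a' * c i * (-1)^(cross_inversions a' (unit_exp i))"
    using perm_coeff_add_unit_exp[OF i, of a'] by simp
  have "exp_subst a i l = (\<lambda>x. a' x + sq_exp l x)" unfolding exp_subst_def a'_def ..
  then have coeff_subst: "perm_coeff (exp_subst a i l) = perm_coeff a' * c l ^ 2"
    using perm_coeff_add_sq_exp[OF l] by simp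
  have prefix: "exp_prefix a i = exp_prefix a' i" unfolding exp_prefix_def a'_def unit_exp_def by simp
  have prefix': "exp_prefix (a \<circ> \<sigma>') (\<sigma> i) = exp_prefix (a' \<circ> \<sigma>') (\<sigma> i)"
    unfolding exp_prefix_def a'_def unit_exp_def
  proof (rule sum.cong[OF refl])
    fix k assume "k \<in> {..<\<sigma> i}"
    then have "\<sigma>' k \<noteq> i" using perm_perm_inv by (metis lessThan_iff less_irrefl)
    then show "(a \<circ> \<sigma>') k = ((\<lambda>x. a x - (if x = i then 1 else 0)) \<circ> \<sigma>') k" by simp
  qed
  define K where "K = (\<Sum>j<n. if j < i \<and> \<sigma> j < \<sigma> i then a' j else 0)"
  have parity: "cross_inversions a' (unit_exp i) + 2 * K = exp_prefix a' i + exp_prefix (a' \<circ> \<sigma>') (\<sigma> i)"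
    unfolding K_def by (rule cross_inversions_unit_exp_parity[OF i])
  have sign: "(-1::'a)^(exp_prefix a' i)
      = (-1)^(cross_inversions a' (unit_exp i) + exp_prefix (a' \<circ> \<sigma>') (\<sigma> i))"
    by (rule minus_one_power_parity_cong[where l=K and k="exp_prefix (a' \<circ> \<sigma>') (\<sigma> i)"])
      (use parity in simp)
  have "(-1)^(exp_prefix a i) * (M $$ (i,l) * perm_coeff (exp_subst a i l))
      = perm_coeff a' * (-1)^(exp_prefix a' i) * (M $$ (i,l) * c l ^ 2)"
    unfolding coeff_subst prefix by (simp only: mult_ac)
  also have "\<dots> = perm_coeff a' * (-1)^(cross_inversions a' (unit_exp i) + exp_prefix (a' \<circ> \<sigma>') (\<sigma> i))
      * (c i * M $$ (\<sigma> i, \<sigma> l))"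
    unfolding sign HM ..
  also have "\<dots> = perm_coeff a * (-1)^(exp_prefix (a \<circ> \<sigma>') (\<sigma> i)) * M $$ (\<sigma> i, \<sigma> l)"
    unfolding coeff_a prefix' power_add by (simp only: mult_ac)
  finally show ?thesis .
qed

lemma perm_map_dmono_closed:
  fixes M :: "'a mat"
  assumes HM: "\<And>i l. i < n \<Longrightarrow> l < n \<Longrightarrow> c i * M $$ (\<sigma> i, \<sigma> l) = M $$ (i,l) * c l ^ 2"
  shows "perm_map (dmono_closed n M a) = smul (perm_coeff a) (dmono_closed n M (a \<circ> \<sigma>'))"
proof -
  let ?co = "\<lambda>i. if odd (a i) then (-1::'a)^(exp_prefix a i) else 0"
  let ?co' = "\<lambda>i. if odd (a i) then (-1::'a)^(exp_prefix (a \<circ> \<sigma>') (\<sigma> i)) else 0"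
  have "perm_map (dmono_closed n M a)
      = (\<Sum>i<n. \<Sum>l<n. smul (?co i * (M $$ (i,l) * perm_coeff (exp_subst a i l))) (mono_elt (exp_subst a i l \<circ> \<sigma>')))"
    unfolding dmono_closed_def dterm_def perm_map_sum perm_map_smul perm_map_mono_elt by (simp add: smul_sum_right smul_smul)
  also have "\<dots>
      = (\<Sum>i<n. \<Sum>l<n. smul (perm_coeff a * ?co' i * M $$ (\<sigma> i, \<sigma> l)) (mono_elt (exp_subst a i l \<circ> \<sigma>')))"
  proof (intro sum.cong refl)
    fix i l assume "i \<in> {..<n}" "l \<in> {..<n}"
    then have il: "i < n" "l < n" by auto
    show "smul (?co i * (M $$ (i,l) * perm_coeff (exp_subst a i l))) (mono_elt (exp_subst a i l \<circ> \<sigma>')) =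
          smul (perm_coeff a * ?co' i * M $$ (\<sigma> i, \<sigma> l)) (mono_elt (exp_subst a i l \<circ> \<sigma>'))"
    proof (cases "odd (a i)")
      case True
      then have "1 \<le> a i" by (cases "a i") auto
      then show ?thesis using perm_coeff_exp_subst[OF HM[OF il] il] True by simp
    qed simp
  qed
  also have "\<dots> = smul (perm_coeff a) (dmono_closed n M (a \<circ> \<sigma>'))"
  proof -
    have "dmono_closed n M (a \<circ> \<sigma>') = (\<Sum>i<n. smul (?co' i) (dterm n M (a \<circ> \<sigma>') (\<sigma> i)))"
      unfolding dmono_closed_def by (rule trans[OF sum_reindex_perm[symmetric]]) (simp add: perm_inv_perm)
    also have "\<dots> = (\<Sum>i<n. smul (?co' i) (\<Sum>l<n. smul (M $$ (\<sigma> i, \<sigma> l)) (mono_elt (exp_subst a i l \<circ> \<sigma>'))))"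
    proof (rule sum.cong[OF refl])
      fix i
      have "dterm n M (a \<circ> \<sigma>') (\<sigma> i)
          = (\<Sum>l<n. smul (M $$ (\<sigma> i, \<sigma> l)) (mono_elt (exp_subst (a \<circ> \<sigma>') (\<sigma> i) (\<sigma> l))))"
        unfolding dterm_def by (rule trans[OF sum_reindex_perm[symmetric]]) simp
      then show "smul (?co' i) (dterm n M (a \<circ> \<sigma>') (\<sigma> i))
          = smul (?co' i) (\<Sum>l<n. smul (M $$ (\<sigma> i, \<sigma> l)) (mono_elt (exp_subst a i l \<circ> \<sigma>')))"
        by (simp add: exp_subst_comp_perm_inv)
    qed
    finally show ?thesis by (simp add: smul_sum_right smul_smul mult_ac)
  qed
  finally show ?thesis .
qed

lemma perm_map_dA:
  fixes M :: "'a mat"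
  assumes HM: "\<And>i l. i < n \<Longrightarrow> l < n \<Longrightarrow> c i * M $$ (\<sigma> i, \<sigma> l) = M $$ (i,l) * c l ^ 2"
    and x: "x \<in> carrierA n"
  shows "perm_map (dA n M x) = dA n M (perm_map x)"
proof -
  let ?S = "{a. x a \<noteq> 0}" and ?S' = "{b. perm_map x b \<noteq> 0}"
  have "perm_map (dA n M x) = (\<Sum>a\<in>?S. smul (x a) (perm_map (dmono n M a)))"
    unfolding dA_def perm_map_sum perm_map_smul ..
  also have "\<dots> = (\<Sum>a\<in>?S. smul (x a) (smul (perm_coeff a) (dmono n M (a \<circ> \<sigma>'))))"
  proof (rule sum.cong[OF refl])
    fix a assume "a \<in> ?S"
    then have am: "a \<in> mons n" using carrierA_support_mons[OF x] by auto
    have "perm_map (dmono n M a) = perm_map (dmono_closed n M a)" by (simp only: dmono_eq_closed[OF am])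
    also have "\<dots> = smul (perm_coeff a) (dmono_closed n M (a \<circ> \<sigma>'))" by (rule perm_map_dmono_closed[OF HM])
    also have "\<dots> = smul (perm_coeff a) (dmono n M (a \<circ> \<sigma>'))" by (simp only: dmono_eq_closed[OF comp_perm_mons(2)[OF am]])
    finally show "smul (x a) (perm_map (dmono n M a)) = smul (x a) (smul (perm_coeff a) (dmono n M (a \<circ> \<sigma>')))" by simp
  qed
  also have "\<dots> = (\<Sum>a\<in>?S. smul (perm_map x (a \<circ> \<sigma>')) (dmono n M (a \<circ> \<sigma>')))"
  proof (rule sum.cong[OF refl])
    fix a
    show "smul (x a) (smul (perm_coeff a) (dmono n M (a \<circ> \<sigma>'))) = smul (perm_map x (a \<circ> \<sigma>')) (dmono n M (a \<circ> \<sigma>'))"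
      unfolding perm_map_apply_comp smul_smul by (simp only: mult.commute)
  qed
  also have "\<dots> = (\<Sum>b\<in>?S'. smul (perm_map x b) (dmono n M b))"
    unfolding perm_map_support
    by (rule sum.reindex_bij_betw[OF bij_betw_comp_perm_inv[of "\<lambda>a. x a \<noteq> 0"]])
  also have "\<dots> = dA n M (perm_map x)" unfolding dA_def ..
  finally show ?thesis .
qed
end


section \<open>Automorphisms induce quasi-permutation matrices\<close>

lemma index_mult_mat_sum:
  assumes "A \<in> carrier_mat n n" "B \<in> carrier_mat n n" "i < n" "k < n"
  shows "(A * B) $$ (i,k) = (\<Sum>j<n. A $$ (i,j) * B $$ (j,k))"
  using assms by (simp add: scalar_prod_def atLeast0LessThan)

lemma graded_aut_carrierA: "graded_aut n f \<Longrightarrow> x \<in> carrierA n \<Longrightarrow> f x \<in> carrierA n"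
  unfolding graded_aut_def bij_betw_def by blast

lemma graded_aut_inj_on: "graded_aut n f \<Longrightarrow> inj_on f (carrierA n)"
  unfolding graded_aut_def bij_betw_def by blast

lemma graded_aut_add:
  "graded_aut n f \<Longrightarrow> x \<in> carrierA n \<Longrightarrow> y \<in> carrierA n \<Longrightarrow> f (x + y) = f x + f y"
  unfolding graded_aut_def by blast

lemma graded_aut_smul: "graded_aut n f \<Longrightarrow> x \<in> carrierA n \<Longrightarrow> f (smul c x) = smul c (f x)"
  unfolding graded_aut_def by blast

lemma graded_aut_skmult:
  "graded_aut n f \<Longrightarrow> x \<in> carrierA n \<Longrightarrow> y \<in> carrierA n \<Longrightarrow> f (skmult n x y) = skmult n (f x) (f y)"
  unfolding graded_aut_def by blast

lemma graded_aut_homog: "graded_aut n f \<Longrightarrow> x \<in> carrierA n \<Longrightarrow> homog n d x \<Longrightarrow> homog n d (f x)"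
  unfolding graded_aut_def by blast

lemma graded_aut_zero:
  assumes "graded_aut n f" shows "f 0 = 0"
proof -
  have "f 0 = f 0 + f 0" using graded_aut_add[OF assms zero_carrierA zero_carrierA] by simp
  then show ?thesis by simp
qed

lemma graded_aut_sum_smul:
  assumes f: "graded_aut n f" and "finite I" and "\<And>i. i \<in> I \<Longrightarrow> g i \<in> carrierA n"
  shows "f (\<Sum>i\<in>I. smul (v i) (g i)) = (\<Sum>i\<in>I. smul (v i) (f (g i)))"
  using assms(2,3)
proof (induction I rule: finite_induct)
  case (insert i I)
  have "smul (v i) (g i) \<in> carrierA n" "(\<Sum>i\<in>I. smul (v i) (g i)) \<in> carrierA n"
    using insert by (auto intro!: sum_carrierA smul_carrierA)
  then have "f (\<Sum>i\<in>insert i I. smul (v i) (g i)) = f (smul (v i) (g i)) + f (\<Sum>i\<in>I. smul (v i) (g i))"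
    unfolding sum.insert[OF insert(1,2)] by (rule graded_aut_add[OF f])
  also have "f (smul (v i) (g i)) = smul (v i) (f (g i))"
    using insert(4) by (simp add: graded_aut_smul[OF f])
  also have "f (\<Sum>i\<in>I. smul (v i) (g i)) = (\<Sum>i\<in>I. smul (v i) (f (g i)))"
    using insert(3,4) by simp
  finally show ?case unfolding sum.insert[OF insert(1,2)] .
qed (simp add: graded_aut_zero[OF f])

lemma mons_degm_1:
  assumes b: "b \<in> mons n" and d: "degm n b = 1"
  shows "\<exists>j<n. b = unit_exp j"
proof -
  have s: "(\<Sum>i<n. b i) = 1" using d unfolding degm_def .
  have "\<exists>j<n. b j \<noteq> 0"
  proof (rule ccontr)
    assume "\<not> (\<exists>j<n. b j \<noteq> 0)"
    then have "\<forall>j<n. b j = 0" by blast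
    then have "(\<Sum>i<n. b i) = 0" by simp
    then show False using s by simp
  qed
  then obtain j where j: "j < n" "b j \<noteq> 0" by blast
  have "(\<Sum>i<n. b i) = b j + (\<Sum>i\<in>{..<n} - {j}. b i)"
    using j by (simp add: sum.remove)
  then have e: "b j + (\<Sum>i\<in>{..<n} - {j}. b i) = 1" using s by simp
  then have bj: "b j = 1" and rest: "(\<Sum>i\<in>{..<n} - {j}. b i) = 0" using j(2) by linarith+
  have z: "\<And>i. i < n \<Longrightarrow> i \<noteq> j \<Longrightarrow> b i = 0" using rest by simp
  have "b = unit_exp j"
  proof (rule ext)
    fix i
    show "b i = unit_exp j i"
    proof (cases "i < n")
      case True then show ?thesis using z bj by (cases "i = j") (auto simp: unit_exp_def)
    next
      case False then show ?thesis using b j unfolding mons_def unit_exp_def by auto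
    qed
  qed
  then show ?thesis using j by blast
qed

lemma homog_1_eq_lin_elt:
  assumes x: "x \<in> carrierA n" and h: "homog n 1 x"
  shows "x = lin_elt n (\<lambda>j. x (unit_exp j))"
proof (rule ext)
  fix b
  show "x b = lin_elt n (\<lambda>j. x (unit_exp j)) b"
  proof (cases "b \<in> unit_exp ` {..<n}")
    case True
    then show ?thesis by (auto simp: lin_elt_unit_exp)
  next
    case False
    have "x b = 0"
    proof (rule ccontr)
      assume "x b \<noteq> 0"
      then have "b \<in> mons n" "degm n b = 1" using carrierA_support_mons[OF x] h unfolding homog_def by auto
      then show False using mons_degm_1 False by blast
    qed
    then show ?thesis using lin_elt_not_unit_exp[OF False] by simp
  qed
qed

lemma degm_unit_exp: "i < n \<Longrightarrow> degm n (unit_exp i) = 1"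
proof -
  assume i: "i < n"
  have "degm n (unit_exp i) = (\<Sum>k<n. if k = i then 1 else 0)" unfolding degm_def unit_exp_def ..
  then show ?thesis using i by simp
qed

lemma gen_homog: "i < n \<Longrightarrow> homog n 1 (gen i)"
  unfolding homog_def gen_eq_mono_elt mono_elt_apply using degm_unit_exp by auto

lemma skmult_gen_gen_sq_exp:
  assumes "j < n" "l < n"
  shows "skmult n (gen j) (gen l) (sq_exp k) = (if j = k \<and> l = k then (1::'a::field) else 0)"
  unfolding gen_eq_mono_elt skmult_mono_elt smul_apply mono_elt_apply
  using unit_exp_sum_eq_sq_exp_iff[of j l k] by (auto simp: skew_sign_unit_exp eq_commute[of "sq_exp k"])


lemma skmult_lin_elt_sq_exp:
  fixes u v :: "nat \<Rightarrow> 'a::field"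
  assumes k: "k < n"
  shows "skmult n (lin_elt n u) (lin_elt n v) (sq_exp k) = u k * v k"
proof -
  have gc: "\<And>j. j \<in> {..<n} \<Longrightarrow> gen j \<in> carrierA n" by (simp add: gen_carrierA)
  have "skmult n (lin_elt n u) (lin_elt n v) = (\<Sum>j<n. smul (u j) (skmult n (gen j) (lin_elt n v)))"
    unfolding lin_elt_def[of n u] by (rule skmult_sum_left[OF gc lin_elt_carrierA])
  also have "\<dots> = (\<Sum>j<n. smul (u j) (\<Sum>l<n. smul (v l) (skmult n (gen j) (gen l))))"
    unfolding lin_elt_def[of n v] by (intro sum.cong refl arg_cong[where f="smul _"] skmult_sum_right[OF gc gen_carrierA]) auto
  finally have e: "skmult n (lin_elt n u) (lin_elt n v) (sq_exp k) = (\<Sum>j<n. u j * (\<Sum>l<n. v l * skmult n (gen j) (gen l) (sq_exp k)))"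
    by (simp add: sum_apply smul_apply)
  also have "\<dots> = (\<Sum>j<n. if j = k then u k * v k else 0)"
  proof (rule sum.cong[OF refl])
    fix j assume j: "j \<in> {..<n}"
    have "(\<Sum>l<n. v l * skmult n (gen j) (gen l) (sq_exp k)) = (\<Sum>l<n. if l = k then (if j = k then v k else 0) else 0)"
      by (rule sum.cong[OF refl]) (use j in \<open>auto simp: skmult_gen_gen_sq_exp\<close>)
    also have "\<dots> = (if j = k then v k else 0)" using k by simp
    finally show "u j * (\<Sum>l<n. v l * skmult n (gen j) (gen l) (sq_exp k)) = (if j = k then u k * v k else 0)" by simp
  qed
  also have "\<dots> = u k * v k" using k by simp
  finally show ?thesis .
qed

lemma sum_mono_elt_sq_exp_apply:
  assumes k: "k < n"
  shows "(\<Sum>l<n. h l * mono_elt (sq_exp l) (sq_exp k)) = (h k :: 'a::field)"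
proof -
  have "(\<Sum>l<n. h l * mono_elt (sq_exp l) (sq_exp k)) = (\<Sum>l<n. if l = k then h k else 0)"
    unfolding mono_elt_apply by (rule sum.cong) (auto simp: sq_exp_eq_iff)
  then show ?thesis using k by simp
qed

lemma dA_gen:
  fixes M :: "'a::field mat"
  assumes i: "i < n"
  shows "dA n M (gen i) = (\<Sum>l<n. smul (M $$ (i,l)) (mono_elt (sq_exp l)))"
proof -
  have S: "{a. (gen i :: 'a elt) a \<noteq> 0} = {unit_exp i}" unfolding gen_eq_mono_elt mono_elt_apply by auto
  have "dA n M (gen i) = dmono n M (unit_exp i)" unfolding dA_def S by (simp add: gen_eq_mono_elt mono_elt_apply smul_one)
  also have "\<dots> = dmono_closed n M (unit_exp i)" by (rule dmono_eq_closed[OF unit_exp_mons[OF i]])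
  finally show ?thesis using dmono_closed_unit_exp[OF i] by simp
qed

lemma dA_lin_elt:
  fixes M :: "'a::field mat"
  shows "dA n M (lin_elt n w) = (\<Sum>j<n. smul (w j) (\<Sum>l<n. smul (M $$ (j,l)) (mono_elt (sq_exp l))))"
proof -
  define J where "J = {j. j < n \<and> w j \<noteq> 0}"
  have S: "{a. lin_elt n w a \<noteq> 0} = unit_exp ` J"
  proof
    show "{a. lin_elt n w a \<noteq> 0} \<subseteq> unit_exp ` J"
    proof
      fix a assume a: "a \<in> {a. lin_elt n w a \<noteq> 0}"
      have "a \<in> unit_exp ` {..<n}"
      proof (rule ccontr)
        assume "a \<notin> unit_exp ` {..<n}"
        then have "lin_elt n w a = 0" by (rule lin_elt_not_unit_exp)
        then show False using a by simp
      qed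
      then obtain j where j: "j < n" "a = unit_exp j" by auto
      then have "w j \<noteq> 0" using a lin_elt_unit_exp[of j n w] by auto
      then show "a \<in> unit_exp ` J" using j unfolding J_def by auto
    qed
    show "unit_exp ` J \<subseteq> {a. lin_elt n w a \<noteq> 0}"
    proof
      fix a assume "a \<in> unit_exp ` J"
      then obtain j where "j < n" "w j \<noteq> 0" "a = unit_exp j" unfolding J_def by auto
      then show "a \<in> {a. lin_elt n w a \<noteq> 0}" using lin_elt_unit_exp[of j n w] by simp
    qed
  qed
  have inj: "inj_on unit_exp J" using unit_exp_eq_iff by (auto simp: inj_on_def)
  have "dA n M (lin_elt n w) = (\<Sum>j\<in>J. smul (lin_elt n w (unit_exp j)) (dmono n M (unit_exp j)))"
    unfolding dA_def S by (rule sum.reindex[OF inj, unfolded comp_def])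
  also have "\<dots> = (\<Sum>j\<in>J. smul (w j) (\<Sum>l<n. smul (M $$ (j,l)) (mono_elt (sq_exp l))))"
    by (rule sum.cong[OF refl]) (auto simp: J_def lin_elt_unit_exp dmono_eq_closed unit_exp_mons dmono_closed_unit_exp)
  also have "\<dots> = (\<Sum>j<n. smul (w j) (\<Sum>l<n. smul (M $$ (j,l)) (mono_elt (sq_exp l))))"
    by (rule sum.mono_neutral_left) (auto simp: J_def smul_zero)
  finally show ?thesis .
qed


lemma invmat_inverts:
  assumes "invertible_mat C"
  shows "inverts_mat C (invmat C) \<and> inverts_mat (invmat C) C"
  unfolding invmat_def
  by (rule someI_ex) (use assms in \<open>auto simp: invertible_mat_def\<close>)

lemma invmat_right_inverse:
  assumes "C \<in> carrier_mat n n" "invertible_mat C"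
  shows "C * invmat C = 1\<^sub>m n"
proof -
  have "C * invmat C = 1\<^sub>m (dim_row C)"
    using invmat_inverts[OF assms(2)] unfolding inverts_mat_def by blast
  then show ?thesis using assms(1) by simp
qed

lemma invmat_carrier:
  assumes C: "C \<in> carrier_mat n n" and inv: "invertible_mat C"
  shows "invmat C \<in> carrier_mat n n"
proof -
  have "C * invmat C = 1\<^sub>m (dim_row C)" "invmat C * C = 1\<^sub>m (dim_row (invmat C))"
    using invmat_inverts[OF inv] unfolding inverts_mat_def by auto
  from arg_cong[OF this(1), of dim_col] arg_cong[OF this(2), of dim_col]
  show ?thesis using C by auto
qed

lemma invmat_left_inverse:
  assumes "C \<in> carrier_mat n n" "invertible_mat C"
  shows "invmat C * C = 1\<^sub>m n"
proof -
  have "invmat C * C = 1\<^sub>m (dim_row (invmat C))"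
    using invmat_inverts[OF assms(2)] unfolding inverts_mat_def by blast
  then show ?thesis using invmat_carrier[OF assms] by simp
qed

lemma invertible_mat_if_det_nonzero:
  fixes C :: "'a::field mat"
  assumes C: "C \<in> carrier_mat n n" and d: "det C \<noteq> 0"
  shows "invertible_mat C"
proof -
  have "C \<in> Units (ring_mat TYPE('a) n ())" by (rule det_non_zero_imp_unit[OF C d])
  then obtain B where B: "B \<in> carrier_mat n n" "B * C = 1\<^sub>m n" "C * B = 1\<^sub>m n"
    unfolding Units_def ring_mat_def by auto
  show ?thesis unfolding invertible_mat_def inverts_mat_def using B C by auto
qed

lemma graded_aut_gen_matrix:
  assumes f: "graded_aut n f"
  shows "\<exists>C\<in>carrier_mat n n. \<forall>i<n. f (gen i) = lin_elt n (\<lambda>j. C $$ (i,j))"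
proof -
  define C where "C = mat n n (\<lambda>(i,j). f (gen i) (unit_exp j))"
  have "f (gen i) = lin_elt n (\<lambda>j. C $$ (i,j))" if i: "i < n" for i
  proof -
    have "f (gen i) = lin_elt n (\<lambda>j. f (gen i) (unit_exp j))"
      using graded_aut_carrierA[OF f gen_carrierA[OF i]]
        graded_aut_homog[OF f gen_carrierA[OF i] gen_homog[OF i]]
      by (rule homog_1_eq_lin_elt)
    also have "\<dots> = lin_elt n (\<lambda>j. C $$ (i,j))" using i by (intro lin_elt_cong) (simp add: C_def)
    finally show ?thesis .
  qed
  moreover have "C \<in> carrier_mat n n" by (simp add: C_def)
  ultimately show ?thesis by blast
qed

lemma skmult_gen_anticomm:
  assumes "i < n" "j < n" "i \<noteq> j"
  shows "skmult n (gen i) (gen j) + skmult n (gen j) (gen i) = (0 :: 'a::field elt)"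
proof (rule ext)
  fix b
  have signs: "skew_sign n (unit_exp i) (unit_exp j) + skew_sign n (unit_exp j) (unit_exp i) = (0::'a)"
    using assms by (cases "i < j") (auto simp: skew_sign_unit_exp)
  have "(\<lambda>x. unit_exp j x + unit_exp i x) = (\<lambda>x. unit_exp i x + unit_exp j x)"
    by (simp add: add.commute)
  then show "(skmult n (gen i) (gen j) + skmult n (gen j) (gen i)) b = (0 :: 'a elt) b"
    unfolding gen_eq_mono_elt skmult_mono_elt plus_fun_apply smul_apply
    using signs by (simp add: distrib_right[symmetric])
qed

lemma graded_aut_column_products_zero:
  fixes f :: "'a::field elt \<Rightarrow> 'a elt"
  assumes f: "graded_aut n f" and two: "(2::'a) \<noteq> 0"
    and fg: "\<And>i. i < n \<Longrightarrow> f (gen i) = lin_elt n (\<lambda>j. C $$ (i,j))"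
    and ij: "i < n" "j < n" "i \<noteq> j" and k: "k < n"
  shows "C $$ (i,k) * C $$ (j,k) = 0"
proof -
  have gen_prod: "skmult n (gen p) (gen q) \<in> carrierA n" if "p < n" "q < n" for p q
    using that by (simp add: gen_eq_mono_elt skmult_mono_elt smul_carrierA mono_elt_carrierA
        add_mons unit_exp_mons)
  have "f (skmult n (gen i) (gen j)) + f (skmult n (gen j) (gen i))
      = f (skmult n (gen i) (gen j) + skmult n (gen j) (gen i))"
    by (rule graded_aut_add[OF f gen_prod[OF ij(1,2)] gen_prod[OF ij(2,1)], symmetric])
  also have "\<dots> = f 0" by (simp only: skmult_gen_anticomm[OF ij])
  finally have "skmult n (lin_elt n (\<lambda>l. C $$ (i,l))) (lin_elt n (\<lambda>l. C $$ (j,l)))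
      + skmult n (lin_elt n (\<lambda>l. C $$ (j,l))) (lin_elt n (\<lambda>l. C $$ (i,l))) = 0"
    using ij by (simp add: graded_aut_skmult[OF f] gen_carrierA fg graded_aut_zero[OF f])
  from fun_cong[OF this, of "sq_exp k"]
  have "C $$ (i,k) * C $$ (j,k) + C $$ (j,k) * C $$ (i,k) = 0"
    unfolding plus_fun_apply zero_fun_apply skmult_lin_elt_sq_exp[OF k] .
  then show ?thesis using two by (simp add: mult.commute flip: mult_2)
qed

lemma graded_aut_matrix_invertible:
  fixes f :: "'a::field elt \<Rightarrow> 'a elt"
  assumes f: "graded_aut n f" and C: "C \<in> carrier_mat n n"
    and fg: "\<And>i. i < n \<Longrightarrow> f (gen i) = lin_elt n (\<lambda>j. C $$ (i,j))"
  shows "invertible_mat C"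
proof (rule ccontr)
  assume "\<not> invertible_mat C"
  then have "det (transpose_mat C) = 0"
    using invertible_mat_if_det_nonzero[OF C] det_transpose[OF C] by auto
  then obtain v where v: "v \<in> carrier_vec n" "v \<noteq> 0\<^sub>v n" "transpose_mat C *\<^sub>v v = 0\<^sub>v n"
    using det_0_iff_vec_prod_zero_field[of "transpose_mat C" n] C by auto
  have v_kernel: "(\<Sum>i<n. v $ i * C $$ (i,j)) = 0" if j: "j < n" for j
  proof -
    have "(transpose_mat C *\<^sub>v v) $ j = 0" using v j by simp
    then have "col C j \<bullet> v = 0" using j C by simp
    then show ?thesis using v C j unfolding scalar_prod_def
      by (simp add: atLeast0LessThan mult.commute)
  qed
  have "f (lin_elt n (\<lambda>i. v $ i)) = (\<Sum>i<n. smul (v $ i) (lin_elt n (\<lambda>j. C $$ (i,j))))"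
    unfolding lin_elt_def[of n "\<lambda>i. v $ i"]
    by (subst graded_aut_sum_smul[OF f]) (auto simp: gen_carrierA fg intro!: sum.cong)
  also have "\<dots> = f 0"
    by (simp add: sum_smul_lin_elt v_kernel lin_elt_cong[of n _ "\<lambda>_. 0"] lin_elt_zero
        graded_aut_zero[OF f])
  finally have "lin_elt n (\<lambda>i. v $ i) = 0"
    using graded_aut_inj_on[OF f] lin_elt_carrierA zero_carrierA unfolding inj_on_def by blast
  have "v = 0\<^sub>v n"
  proof (rule eq_vecI)
    fix i assume "i < dim_vec (0\<^sub>v n :: 'a vec)"
    then have i: "i < n" by simp
    have "v $ i = lin_elt n (\<lambda>i. v $ i) (unit_exp i)" by (rule lin_elt_unit_exp[OF i, symmetric])
    then show "v $ i = 0\<^sub>v n $ i" using i \<open>lin_elt n (\<lambda>i. v $ i) = 0\<close> by simp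
  qed (use v in simp)
  with v(2) show False ..
qed

lemma invertible_mat_nonzero_in_row:
  fixes C :: "'a::field mat"
  assumes C: "C \<in> carrier_mat n n" and inv: "invertible_mat C" and i: "i < n"
  shows "\<exists>j<n. C $$ (i,j) \<noteq> 0"
proof (rule ccontr)
  assume "\<not> (\<exists>j<n. C $$ (i,j) \<noteq> 0)"
  then have "(C * invmat C) $$ (i,i) = 0"
    using index_mult_mat_sum[OF C invmat_carrier[OF C inv] i i] by simp
  then show False using invmat_right_inverse[OF C inv] i by simp
qed

lemma invertible_mat_nonzero_in_col:
  fixes C :: "'a::field mat"
  assumes C: "C \<in> carrier_mat n n" and inv: "invertible_mat C" and j: "j < n"
  shows "\<exists>i<n. C $$ (i,j) \<noteq> 0"
proof (rule ccontr)
  assume "\<not> (\<exists>i<n. C $$ (i,j) \<noteq> 0)"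
  then have "(invmat C * C) $$ (j,j) = 0"
    using index_mult_mat_sum[OF invmat_carrier[OF C inv] C j j] by simp
  then show False using invmat_left_inverse[OF C inv] j by simp
qed

lemma QPL_if_column_products_zero:
  fixes C :: "'a::field mat"
  assumes C: "C \<in> carrier_mat n n" and inv: "invertible_mat C"
    and col: "\<And>i j k. i < n \<Longrightarrow> j < n \<Longrightarrow> i \<noteq> j \<Longrightarrow> k < n \<Longrightarrow> C $$ (i,k) * C $$ (j,k) = 0"
  shows "QPL n C"
proof -
  have row_nonzero: "\<exists>j<n. C $$ (i,j) \<noteq> 0" if "i < n" for i
    using invertible_mat_nonzero_in_row[OF C inv that] .
  have col_nonzero: "\<exists>i<n. C $$ (i,j) \<noteq> 0" if "j < n" for j
    using invertible_mat_nonzero_in_col[OF C inv that] .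
  have col_unique: "\<exists>!i. i < n \<and> C $$ (i,j) \<noteq> 0" if j: "j < n" for j
    using col_nonzero[OF j] col j by (metis mult_eq_0_iff)
  define row_of where "row_of = (\<lambda>j. THE i. i < n \<and> C $$ (i,j) \<noteq> 0)"
  have row_of: "row_of j < n \<and> C $$ (row_of j, j) \<noteq> 0" if "j < n" for j
    unfolding row_of_def using theI'[OF col_unique[OF that]] .
  have row_of_eq: "row_of j = i" if "j < n" "i < n" "C $$ (i,j) \<noteq> 0" for i j
    unfolding row_of_def using the1_equality[OF col_unique[OF that(1)]] that by auto
  have "row_of ` {..<n} = {..<n}"
  proof
    show "row_of ` {..<n} \<subseteq> {..<n}" using row_of by auto
    show "{..<n} \<subseteq> row_of ` {..<n}"
    proof
      fix i assume "i \<in> {..<n}"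
      then obtain j where "j < n" "C $$ (i,j) \<noteq> 0" using row_nonzero by auto
      then show "i \<in> row_of ` {..<n}" using row_of_eq \<open>i \<in> {..<n}\<close> by (metis imageI lessThan_iff)
    qed
  qed
  \<comment> \<open>each row is hit by some column, so by counting no row is hit twice\<close>
  then have "inj_on row_of {..<n}" by (intro eq_card_imp_inj_on) auto
  then have row_unique: "\<exists>!j. j < n \<and> C $$ (i,j) \<noteq> 0" if i: "i < n" for i
  proof -
    assume inj: "inj_on row_of {..<n}"
    obtain j where j: "j < n" "C $$ (i,j) \<noteq> 0" using row_nonzero[OF i] by auto
    show ?thesis
    proof (rule ex1I[of _ j])
      fix j' assume j': "j' < n \<and> C $$ (i,j') \<noteq> 0"
      then have "row_of j' = row_of j" using row_of_eq j i by simp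
      then show "j' = j" using inj j j' unfolding inj_on_def by simp
    qed (use j in simp)
  qed
  show ?thesis unfolding QPL_def using C inv row_unique col_unique by auto
qed

lemma Aut_dg_matrix_relation:
  fixes M C :: "'a::field mat"
  assumes M: "M \<in> carrier_mat n n" and C: "C \<in> carrier_mat n n" and f: "f \<in> Aut_dg n M"
    and fg: "\<And>i. i < n \<Longrightarrow> f (gen i) = lin_elt n (\<lambda>j. C $$ (i,j))"
  shows "C * M = M * sqmat C"
proof (rule eq_matI)
  have ga: "graded_aut n f" and comm: "\<And>x. x \<in> carrierA n \<Longrightarrow> f (dA n M x) = dA n M (f x)"
    using f unfolding Aut_dg_def by auto
  have sq: "sqmat C \<in> carrier_mat n n" using C unfolding sqmat_def by auto
  fix i k assume "i < dim_row (M * sqmat C)" "k < dim_col (M * sqmat C)"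
  then have i: "i < n" and k: "k < n" using M sq by auto
  \<comment> \<open>compare the coefficients of x_k^2 on both sides of f (d x_i) = d (f x_i)\<close>
  have "f (dA n M (gen i)) = (\<Sum>l<n. smul (M $$ (i,l)) (f (skmult n (gen l) (gen l))))"
    unfolding dA_gen[OF i] skmult_gen_self
    by (rule graded_aut_sum_smul[OF ga]) (simp_all add: mono_elt_carrierA sq_exp_mons)
  also have "\<dots> = (\<Sum>l<n. smul (M $$ (i,l))
      (skmult n (lin_elt n (\<lambda>j. C $$ (l,j))) (lin_elt n (\<lambda>j. C $$ (l,j)))))"
    by (intro sum.cong refl) (simp add: graded_aut_skmult[OF ga] gen_carrierA fg)
  finally have "f (dA n M (gen i)) (sq_exp k) = (\<Sum>l<n. M $$ (i,l) * (C $$ (l,k) * C $$ (l,k)))"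
    by (simp add: sum_apply smul_apply skmult_lin_elt_sq_exp[OF k])
  also have "\<dots> = (M * sqmat C) $$ (i,k)"
    unfolding index_mult_mat_sum[OF M sq i k] using C k by (simp add: sqmat_def power2_eq_square)
  finally have lhs: "f (dA n M (gen i)) (sq_exp k) = (M * sqmat C) $$ (i,k)" .
  have "dA n M (f (gen i)) (sq_exp k) = (\<Sum>j<n. C $$ (i,j) * M $$ (j,k))"
    unfolding fg[OF i] dA_lin_elt by (simp add: sum_apply smul_apply sum_mono_elt_sq_exp_apply[OF k])
  also have "\<dots> = (C * M) $$ (i,k)" by (simp add: index_mult_mat_sum[OF C M i k])
  finally show "(C * M) $$ (i,k) = (M * sqmat C) $$ (i,k)"
    using lhs comm[OF gen_carrierA[OF i]] by simp
qed (use M C in \<open>auto simp: sqmat_def\<close>)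

section \<open>The automorphism group\<close>

lemma invmat_conj_eq_iff:
  fixes M C :: "'a::field mat"
  assumes M: "M \<in> carrier_mat n n" and C: "C \<in> carrier_mat n n" and inv: "invertible_mat C"
  shows "M = invmat C * M * sqmat C \<longleftrightarrow> C * M = M * sqmat C"
proof -
  note D = invmat_carrier[OF C inv] invmat_right_inverse[OF C inv] invmat_left_inverse[OF C inv]
  have sq: "sqmat C \<in> carrier_mat n n" using C unfolding sqmat_def by auto
  have cancel: "C * (invmat C * X) = X" "invmat C * (C * X) = X" if X: "X \<in> carrier_mat n n" for X
  proof -
    have "C * (invmat C * X) = (C * invmat C) * X" "invmat C * (C * X) = (invmat C * C) * X"
      using C D(1) X by (simp_all only: assoc_mult_mat)
    then show "C * (invmat C * X) = X" "invmat C * (C * X) = X" using D(2,3) X by simp_all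
  qed
  show ?thesis
  proof
    assume "M = invmat C * M * sqmat C"
    then have "C * M = C * (invmat C * M * sqmat C)" by (rule arg_cong)
    also have "\<dots> = M * sqmat C" using D M sq cancel(1)[of "M * sqmat C"] by simp
    finally show "C * M = M * sqmat C" .
  next
    assume CM: "C * M = M * sqmat C"
    have "invmat C * M * sqmat C = invmat C * (C * M)" using D M sq by (simp add: CM)
    also have "\<dots> = M" by (rule cancel(2)[OF M])
    finally show "M = invmat C * M * sqmat C" by simp
  qed
qed

lemma QPL_signed_perm:
  fixes C :: "'a::field mat"
  assumes "QPL n C"
  obtains \<sigma> \<sigma>' c where "signed_perm n \<sigma> \<sigma>' c"
    and "\<And>i j. i < n \<Longrightarrow> j < n \<Longrightarrow> C $$ (i,j) = (if j = \<sigma> i then c i else 0)"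
proof -
  have row_unique: "\<And>i. i < n \<Longrightarrow> \<exists>!j. j < n \<and> C $$ (i,j) \<noteq> 0"
    and col_unique: "\<And>j. j < n \<Longrightarrow> \<exists>!i. i < n \<and> C $$ (i,j) \<noteq> 0"
    using assms unfolding QPL_def by auto
  define \<sigma> where "\<sigma> = (\<lambda>i. if i < n then (THE j. j < n \<and> C $$ (i,j) \<noteq> 0) else i)"
  define \<sigma>' where "\<sigma>' = (\<lambda>j. if j < n then (THE i. i < n \<and> C $$ (i,j) \<noteq> 0) else j)"
  have \<sigma>: "\<sigma> i < n \<and> C $$ (i, \<sigma> i) \<noteq> 0" if "i < n" for i
    unfolding \<sigma>_def using theI'[OF row_unique[OF that]] that by simp
  have \<sigma>': "\<sigma>' j < n \<and> C $$ (\<sigma>' j, j) \<noteq> 0" if "j < n" for j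
    unfolding \<sigma>'_def using theI'[OF col_unique[OF that]] that by simp
  have row_zero: "C $$ (i,j) = 0" if "i < n" "j < n" "j \<noteq> \<sigma> i" for i j
    using row_unique[OF that(1)] \<sigma>[OF that(1)] that by blast
  have col_zero: "C $$ (i,j) = 0" if "i < n" "j < n" "i \<noteq> \<sigma>' j" for i j
    using col_unique[OF that(2)] \<sigma>'[OF that(2)] that by blast
  have "signed_perm n \<sigma> \<sigma>' (\<lambda>i. C $$ (i, \<sigma> i))"
  proof
    show "\<sigma>' (\<sigma> i) = i" for i
    proof (cases "i < n")
      case True then show ?thesis using \<sigma>[OF True] col_zero[of i "\<sigma> i"] by metis
    qed (simp add: \<sigma>_def \<sigma>'_def)
    show "\<sigma> (\<sigma>' j) = j" for j
    proof (cases "j < n")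
      case True then show ?thesis using \<sigma>'[OF True] row_zero[of "\<sigma>' j" j] by metis
    qed (simp add: \<sigma>_def \<sigma>'_def)
    show "\<sigma> i < n" "C $$ (i, \<sigma> i) \<noteq> 0" if "i < n" for i using \<sigma>[OF that] by simp_all
    show "\<sigma>' j < n" if "j < n" for j using \<sigma>'[OF that] by simp
    show "\<sigma> i = i" "\<sigma>' i = i" if "n \<le> i" for i using that by (simp_all add: \<sigma>_def \<sigma>'_def)
  qed
  moreover have "C $$ (i,j) = (if j = \<sigma> i then C $$ (i, \<sigma> i) else 0)" if "i < n" "j < n" for i j
    using row_zero that by auto
  ultimately show thesis using that by blast
qed

context signed_perm
begin

lemma matrix_relation_entries:
  fixes M C :: "'a mat"
  assumes M: "M \<in> carrier_mat n n" and C: "C \<in> carrier_mat n n"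
    and C_eq: "\<And>i j. i < n \<Longrightarrow> j < n \<Longrightarrow> C $$ (i,j) = (if j = \<sigma> i then c i else 0)"
    and CM: "C * M = M * sqmat C" and i: "i < n" and l: "l < n"
  shows "c i * M $$ (\<sigma> i, \<sigma> l) = M $$ (i,l) * c l ^ 2"
proof -
  have sq: "sqmat C \<in> carrier_mat n n" using C unfolding sqmat_def by auto
  have \<sigma>l: "\<sigma> l < n" using perm_less[OF l] .
  have "(C * M) $$ (i, \<sigma> l) = (\<Sum>j<n. if j = \<sigma> i then c i * M $$ (j, \<sigma> l) else 0)"
    unfolding index_mult_mat_sum[OF C M i \<sigma>l] by (intro sum.cong refl) (simp add: C_eq i)
  also have "\<dots> = c i * M $$ (\<sigma> i, \<sigma> l)" using perm_less[OF i] by simp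
  finally have "(C * M) $$ (i, \<sigma> l) = c i * M $$ (\<sigma> i, \<sigma> l)" .
  moreover have "(M * sqmat C) $$ (i, \<sigma> l) = (\<Sum>j<n. if j = l then M $$ (i,l) * c l ^ 2 else 0)"
    unfolding index_mult_mat_sum[OF M sq i \<sigma>l] using C \<sigma>l
    by (intro sum.cong refl) (auto simp: sqmat_def C_eq perm_eq_iff)
  ultimately show ?thesis using CM l by simp
qed

lemma perm_map_Aut_dg:
  fixes M :: "'a mat"
  assumes "\<And>i l. i < n \<Longrightarrow> l < n \<Longrightarrow> c i * M $$ (\<sigma> i, \<sigma> l) = M $$ (i,l) * c l ^ 2"
  shows "perm_map \<in> Aut_dg n M"
  unfolding Aut_dg_def graded_aut_def
  using perm_map_bij perm_map_add perm_map_smul perm_map_skmult perm_map_oneA perm_map_homog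
    perm_map_dA[OF assms] by auto

end

lemma QPL_imp_Aut_dg:
  fixes M C :: "'a::field mat"
  assumes M: "M \<in> carrier_mat n n" and Q: "QPL n C" and CM: "C * M = M * sqmat C"
  shows "\<exists>f\<in>Aut_dg n M. \<forall>i<n. f (gen i) = lin_elt n (\<lambda>j. C $$ (i,j))"
proof -
  obtain \<sigma> \<sigma>' c where P: "signed_perm n \<sigma> \<sigma>' c"
    and C_eq: "\<And>i j. i < n \<Longrightarrow> j < n \<Longrightarrow> C $$ (i,j) = (if j = \<sigma> i then c i else 0)"
    using QPL_signed_perm[OF Q] by blast
  interpret signed_perm n \<sigma> \<sigma>' c by (fact P)
  have C: "C \<in> carrier_mat n n" using Q unfolding QPL_def by simp
  have "perm_map \<in> Aut_dg n M"
    using matrix_relation_entries[OF M C C_eq CM] by (intro perm_map_Aut_dg)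
  moreover have "perm_map (gen i) = lin_elt n (\<lambda>j. C $$ (i,j))" if i: "i < n" for i
  proof -
    have "lin_elt n (\<lambda>j. C $$ (i,j)) = (\<Sum>j<n. if j = \<sigma> i then smul (c i) (gen j) else 0)"
      unfolding lin_elt_def by (intro sum.cong refl) (simp add: C_eq i smul_zero)
    then show ?thesis using perm_less[OF i] by (simp add: perm_map_gen[OF i])
  qed
  ultimately show ?thesis by blast
qed

lemma Aut_dg_imp_QPL:
  fixes M C :: "'a::field mat"
  assumes two: "(2::'a) \<noteq> 0" and M: "M \<in> carrier_mat n n" and C: "C \<in> carrier_mat n n"
    and f: "f \<in> Aut_dg n M" and fg: "\<And>i. i < n \<Longrightarrow> f (gen i) = lin_elt n (\<lambda>j. C $$ (i,j))"
  shows "QPL n C \<and> C * M = M * sqmat C"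
proof
  have ga: "graded_aut n f" using f unfolding Aut_dg_def by simp
  show "QPL n C"
    using C graded_aut_matrix_invertible[OF ga C fg] graded_aut_column_products_zero[OF ga two fg]
    by (rule QPL_if_column_products_zero)
  show "C * M = M * sqmat C" by (rule Aut_dg_matrix_relation[OF M C f fg])
qed

lemma Aut_dg_matrices:
  fixes M :: "'a::field mat"
  assumes two: "(2::'a) \<noteq> 0" and M: "M \<in> carrier_mat n n"
  shows "{C \<in> carrier_mat n n. \<exists>f\<in>Aut_dg n M. \<forall>i<n. f (gen i) = lin_elt n (\<lambda>j. C $$ (i,j))}
      = {C. QPL n C \<and> M = invmat C * M * sqmat C}"
proof (intro equalityI subsetI)
  fix C assume "C \<in> {C \<in> carrier_mat n n. \<exists>f\<in>Aut_dg n M. \<forall>i<n. f (gen i) = lin_elt n (\<lambda>j. C $$ (i,j))}"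
  then obtain f where C: "C \<in> carrier_mat n n" and f: "f \<in> Aut_dg n M"
    and fg: "\<forall>i<n. f (gen i) = lin_elt n (\<lambda>j. C $$ (i,j))" by blast
  have "QPL n C \<and> C * M = M * sqmat C" using Aut_dg_imp_QPL[OF two M C f] fg by simp
  moreover from this have "invertible_mat C" unfolding QPL_def by blast
  ultimately show "C \<in> {C. QPL n C \<and> M = invmat C * M * sqmat C}"
    using invmat_conj_eq_iff[OF M C] by blast
next
  fix C assume "C \<in> {C. QPL n C \<and> M = invmat C * M * sqmat C}"
  then have Q: "QPL n C" and conj: "M = invmat C * M * sqmat C" by simp_all
  have C: "C \<in> carrier_mat n n" and "invertible_mat C" using Q unfolding QPL_def by blast+
  then have "C * M = M * sqmat C" using invmat_conj_eq_iff[OF M] conj by blast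
  then show "C \<in> {C \<in> carrier_mat n n. \<exists>f\<in>Aut_dg n M. \<forall>i<n. f (gen i) = lin_elt n (\<lambda>j. C $$ (i,j))}"
    using QPL_imp_Aut_dg[OF M Q] C by blast
qed

theorem corollary3p7:
  fixes M :: "'a::field_char_0 mat" and n :: nat
  assumes "alg_closed_field TYPE('a)"
    and "n \<ge> 2"
    and "M \<in> carrier_mat n n"
  shows "(\<forall>f\<in>Aut_dg n M. \<exists>C\<in>carrier_mat n n.
            \<forall>i<n. f (gen i) = (\<Sum>j<n. smul (C $$ (i,j)) (gen j)))
       \<and> {C \<in> carrier_mat n n. \<exists>f\<in>Aut_dg n M.
            \<forall>i<n. f (gen i) = (\<Sum>j<n. smul (C $$ (i,j)) (gen j))}
         = {C. QPL n C \<and> M = invmat C * M * sqmat C}"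
proof -
  \<comment> \<open>Characteristic 0 enters only through 2 \<noteq> 0.\<close>
  have two: "(2::'a) \<noteq> 0" by simp
  show ?thesis
    unfolding lin_elt_def[symmetric] Aut_dg_matrices[OF two \<open>M \<in> carrier_mat n n\<close>]
    using graded_aut_gen_matrix unfolding Aut_dg_def by blast
qed

end
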